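(* Let $R$ be an arithmetic ring such that, for every maximal ideal $M$ of $R$, the ring $R_M$ is either a domain or a noncoherent ring. Then $\lambda\text{-}\dim(R)\le 2$.
   Context: All rings are commutative with identity. $R$ is arithmetic if $R_M$ is a valuation ring (ideals totally ordered by inclusion) for every maximal ideal $M$. For an $R$-module $E$, $\lambda_R(E)$ is the supremum of the $n$ for which there is an exact sequence $F_n\to\cdots\to F_0\to E\to0$ with $F_i$ free of finite rank ($-1$ if $E$ is not finitely generated); $\lambda\text{-}\dim(R)$ is the least $n$ (or $\infty$) such that $\lambda_R(E)\ge n$ implies $\lambda_R(E)=\infty$ for all $R$-modules $E$. *)

theory Defs
  imports "HOL-Algebra.Module" "HOL-Algebra.Ideal"
begin

definition loc_rel :: "('a, 'm) ring_scheme \<Rightarrow> 'a set \<Rightarrow> (('a \<times> 'a) \<times> ('a \<times> 'a)) set" where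
  "loc_rel R M = {((a, s), (b, t)). a \<in> carrier R \<and> s \<in> carrier R - M \<and>
       b \<in> carrier R \<and> t \<in> carrier R - M \<and>
       (\<exists>u \<in> carrier R - M. u \<otimes>\<^bsub>R\<^esub> a \<otimes>\<^bsub>R\<^esub> t = u \<otimes>\<^bsub>R\<^esub> b \<otimes>\<^bsub>R\<^esub> s)}"

definition loc_class :: "('a, 'm) ring_scheme \<Rightarrow> 'a set \<Rightarrow> 'a \<Rightarrow> 'a \<Rightarrow> ('a \<times> 'a) set" where
  "loc_class R M a s = loc_rel R M `` {(a, s)}"

text \<open>The ring of fractions R_M = S^{-1} R with S = R - M; operations on classes are
  defined via representatives (the union of the classes of all representative results,
  which is a single class by well-definedness).\<close>
definition loc_mult :: "('a, 'm) ring_scheme \<Rightarrow> 'a set \<Rightarrow> ('a \<times> 'a) set \<Rightarrow> ('a \<times> 'a) set \<Rightarrow> ('a \<times> 'a) set" where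
  "loc_mult R M P Q = \<Union>{loc_class R M (a \<otimes>\<^bsub>R\<^esub> b) (s \<otimes>\<^bsub>R\<^esub> t) | a s b t. (a, s) \<in> P \<and> (b, t) \<in> Q}"

definition loc_add :: "('a, 'm) ring_scheme \<Rightarrow> 'a set \<Rightarrow> ('a \<times> 'a) set \<Rightarrow> ('a \<times> 'a) set \<Rightarrow> ('a \<times> 'a) set" where
  "loc_add R M P Q = \<Union>{loc_class R M (a \<otimes>\<^bsub>R\<^esub> t \<oplus>\<^bsub>R\<^esub> b \<otimes>\<^bsub>R\<^esub> s) (s \<otimes>\<^bsub>R\<^esub> t) | a s b t. (a, s) \<in> P \<and> (b, t) \<in> Q}"

definition localization :: "('a, 'm) ring_scheme \<Rightarrow> 'a set \<Rightarrow> ('a \<times> 'a) set ring" where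
  "localization R M =
    \<lparr> carrier = (carrier R \<times> (carrier R - M)) // loc_rel R M,
      mult = loc_mult R M,
      one = loc_class R M \<one>\<^bsub>R\<^esub> \<one>\<^bsub>R\<^esub>,
      zero = loc_class R M \<zero>\<^bsub>R\<^esub> \<one>\<^bsub>R\<^esub>,
      add = loc_add R M \<rparr>"

definition valuation_ring :: "('c, 'm) ring_scheme \<Rightarrow> bool" where
  "valuation_ring S \<longleftrightarrow> cring S \<and> (\<forall>I J. ideal I S \<longrightarrow> ideal J S \<longrightarrow> I \<subseteq> J \<or> J \<subseteq> I)"

definition arithmetic_ring :: "('a, 'm) ring_scheme \<Rightarrow> bool" where
  "arithmetic_ring R \<longleftrightarrow> cring R \<and>
     (\<forall>M. maximalideal M R \<longrightarrow> valuation_ring (localization R M))"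

text \<open>R^k as extensional functions nat => carrier R, vanishing from index k on.\<close>
definition fvec :: "('a, 'm) ring_scheme \<Rightarrow> nat \<Rightarrow> (nat \<Rightarrow> 'a) set" where
  "fvec R k = {x. (\<forall>j<k. x j \<in> carrier R) \<and> (\<forall>j\<ge>k. x j = \<zero>\<^bsub>R\<^esub>)}"

definition matvec :: "('a, 'm) ring_scheme \<Rightarrow> (nat \<Rightarrow> nat \<Rightarrow> 'a) \<Rightarrow> nat \<Rightarrow> nat \<Rightarrow> (nat \<Rightarrow> 'a) \<Rightarrow> (nat \<Rightarrow> 'a)" where
  "matvec R A m k x = (\<lambda>r. if r < m then (\<Oplus>\<^bsub>R\<^esub> c \<in> {..<k}. A r c \<otimes>\<^bsub>R\<^esub> x c) else \<zero>\<^bsub>R\<^esub>)"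

definition lincomb :: "('a, 'b, 'm) module_scheme \<Rightarrow> nat \<Rightarrow> (nat \<Rightarrow> 'b) \<Rightarrow> (nat \<Rightarrow> 'a) \<Rightarrow> 'b" where
  "lincomb E k g x = (\<Oplus>\<^bsub>E\<^esub> j \<in> {..<k}. x j \<odot>\<^bsub>E\<^esub> g j)"

text \<open>lambda_ge R E n: there is an exact sequence F_n -> ... -> F_0 -> E -> 0 with
  F_i = R^(k i) free of finite rank; A i is the matrix of F_i -> F_(i-1) (1 <= i <= n),
  g describes F_0 -> E.  For n = 0 this just says that E is finitely generated.\<close>
definition lambda_ge :: "('a, 'm) ring_scheme \<Rightarrow> ('a, 'b, 'n) module_scheme \<Rightarrow> nat \<Rightarrow> bool" where
  "lambda_ge R E n \<longleftrightarrow>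
    (\<exists>(k :: nat \<Rightarrow> nat) (A :: nat \<Rightarrow> nat \<Rightarrow> nat \<Rightarrow> 'a) (g :: nat \<Rightarrow> 'b).
       (\<forall>j < k 0. g j \<in> carrier E) \<and>
       (\<forall>i\<in>{1..n}. \<forall>r < k (i - 1). \<forall>c < k i. A i r c \<in> carrier R) \<and>
       \<comment> \<open>exactness at E: F_0 -> E is surjective\<close>
       (\<forall>y \<in> carrier E. \<exists>x \<in> fvec R (k 0). y = lincomb E (k 0) g x) \<and>
       \<comment> \<open>exactness at F_0\<close>
       (1 \<le> n \<longrightarrow> (\<forall>x \<in> fvec R (k 0).
            lincomb E (k 0) g x = \<zero>\<^bsub>E\<^esub> \<longleftrightarrow> (\<exists>z \<in> fvec R (k 1). x = matvec R (A 1) (k 0) (k 1) z))) \<and>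
       \<comment> \<open>exactness at F_i, 1 <= i < n\<close>
       (\<forall>i. 1 \<le> i \<and> i < n \<longrightarrow> (\<forall>x \<in> fvec R (k i).
            matvec R (A i) (k (i - 1)) (k i) x = (\<lambda>_. \<zero>\<^bsub>R\<^esub>) \<longleftrightarrow>
            (\<exists>z \<in> fvec R (k (Suc i)). x = matvec R (A (Suc i)) (k i) (k (Suc i)) z))))"

definition lambda_infinite :: "('a, 'm) ring_scheme \<Rightarrow> ('a, 'b, 'n) module_scheme \<Rightarrow> bool" where
  "lambda_infinite R E \<longleftrightarrow> (\<forall>n. lambda_ge R E n)"

definition ideal_module :: "('c, 'm) ring_scheme \<Rightarrow> 'c set \<Rightarrow> ('c, 'c) module" where
  "ideal_module S I = \<lparr> carrier = I, mult = mult S, one = one S, zero = zero S, add = add S,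
     smult = mult S \<rparr>"

text \<open>S is coherent iff every finitely generated ideal is finitely presented.\<close>
definition coherent_ring :: "('c, 'm) ring_scheme \<Rightarrow> bool" where
  "coherent_ring S \<longleftrightarrow> (\<forall>I. ideal I S \<longrightarrow> lambda_ge S (ideal_module S I) 0
       \<longrightarrow> lambda_ge S (ideal_module S I) 1)"

end

theory Submission
  imports Defs
begin

text \<open>
  Take an exact sequence \<open>F\<^sub>2 \<rightarrow> F\<^sub>1 \<rightarrow> F\<^sub>0 \<rightarrow> E \<rightarrow> 0\<close> with matrices \<open>A\<^sub>2\<close>, \<open>A\<^sub>1\<close>. It suffices
  to find \<open>T\<close> with \<open>A\<^sub>1 T = A\<^sub>1\<close> and \<open>T A\<^sub>2 = 0\<close>: then \<open>T\<close> is idempotent with kernel \<open>ker A\<^sub>1\<close>,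
  and \<open>A\<^sub>1, 1 - T, T, 1 - T, \<dots>\<close> continues the resolution forever. The multipliers \<open>\<rho>\<close> for
  which \<open>A\<^sub>1 T = \<rho> A\<^sub>1\<close>, \<open>T A\<^sub>2 = 0\<close> is solvable form an ideal, so it suffices to find one
  outside each maximal ideal \<open>M\<close>, that is, to solve the problem over \<open>R\<^sub>M\<close> and clear denominators.

  \<open>R\<^sub>M\<close> is a chain ring in which a nonzero element with finitely generated annihilator is
  regular: trivially for a domain, and for a noncoherent one because a single nonzero principal
  annihilator \<open>ann d = c R\<close> would make every annihilator principal, hence the ring coherent.
  Over such a ring the kernel of a matrix, if finitely generated, is a direct summand: column
  operations turn an entry \<open>p\<close> dividing all others into a pivot alone in its row; the pivot
  coordinates of the kernel then generate \<open>ann p\<close>, which is therefore zero, so the pivot column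
  can be dropped and induction on the number of columns applies.
\<close>

section \<open>Chain rings\<close>

definition ann :: "('a, 'm) ring_scheme \<Rightarrow> 'a \<Rightarrow> 'a set" where
  "ann R p = {y \<in> carrier R. p \<otimes>\<^bsub>R\<^esub> y = \<zero>\<^bsub>R\<^esub>}"

context cring
begin

lemma mem_PIdl_iff: "g \<in> carrier R \<Longrightarrow> x \<in> PIdl g \<longleftrightarrow> (\<exists>v\<in>carrier R. x = g \<otimes> v)"
  unfolding cgenideal_def by (auto simp: m_comm)

lemma PIdl_zero: "PIdl \<zero> = {\<zero>}"
  using cgenideal_eq_genideal[of \<zero>] genideal_zero by simp

lemma PIdl_one: "PIdl \<one> = carrier R"
  using cgenideal_eq_genideal[of \<one>] genideal_one by simp

lemma ideal_ann:
  assumes p: "p \<in> carrier R"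
  shows "ideal (ann R p) R"
proof (rule idealI[OF ring_axioms])
  show "subgroup (ann R p) (add_monoid R)"
  proof
    show "x \<otimes>\<^bsub>add_monoid R\<^esub> y \<in> ann R p" if "x \<in> ann R p" "y \<in> ann R p" for x y
      using that p by (simp add: ann_def r_distr)
    show "inv\<^bsub>add_monoid R\<^esub> x \<in> ann R p" if "x \<in> ann R p" for x
      using that p by (simp add: ann_def r_minus a_inv_def[symmetric])
  qed (auto simp: ann_def p)
  show "x \<otimes> a \<in> ann R p" "a \<otimes> x \<in> ann R p" if "a \<in> ann R p" "x \<in> carrier R" for a x
    using that p m_lcomm[of p x a] by (auto simp: ann_def m_comm[of a x])
qed

lemma Units_factor:
  assumes "a \<in> carrier R" "b \<in> carrier R" "a \<otimes> b \<in> Units R"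
  shows "a \<in> Units R"
proof -
  define e where "e = b \<otimes> inv (a \<otimes> b)"
  have e: "e \<in> carrier R" unfolding e_def using assms by auto
  have "a \<otimes> e = \<one>" unfolding e_def using assms by (simp add: m_assoc[symmetric])
  then show ?thesis using e assms(1) m_comm[OF assms(1) e] unfolding Units_def by auto
qed

lemma minus_eq_zero_iff:
  assumes "a \<in> carrier R" "b \<in> carrier R"
  shows "a \<ominus> b = \<zero> \<longleftrightarrow> a = b"
proof
  assume "a \<ominus> b = \<zero>"
  moreover have "a = (a \<ominus> b) \<oplus> b" using assms by algebra
  ultimately show "a = b" using assms by simp
qed (use assms in \<open>simp add: a_minus_def r_neg\<close>)

lemma Units_mult_eq_zero:
  assumes "x \<in> carrier R" "e \<in> Units R" "x \<otimes> e = \<zero>"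
  shows "x = \<zero>"
proof -
  have "x = x \<otimes> (e \<otimes> inv e)" using assms(1,2) by simp
  also have "\<dots> = (x \<otimes> e) \<otimes> inv e" using assms(1,2) by (simp add: m_assoc Units_closed)
  also have "\<dots> = \<zero>" using assms(2,3) by simp
  finally show ?thesis .
qed

end

locale chain_ring = cring +
  assumes divisibility_total: "a \<in> carrier R \<Longrightarrow> b \<in> carrier R \<Longrightarrow>
     (\<exists>c\<in>carrier R. b = a \<otimes> c) \<or> (\<exists>c\<in>carrier R. a = b \<otimes> c)"
begin

lemma nonunit_add:
  assumes "a \<in> carrier R" "b \<in> carrier R" "a \<notin> Units R" "b \<notin> Units R"
  shows "a \<oplus> b \<notin> Units R"
proof -
  have "a \<oplus> b \<notin> Units R" if "x \<in> carrier R" "x \<notin> Units R" "c \<in> carrier R"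
      "a \<oplus> b = x \<otimes> (\<one> \<oplus> c)" for x c
    using that Units_factor[of x "\<one> \<oplus> c"] by auto
  moreover have "a \<oplus> b = a \<otimes> (\<one> \<oplus> c)" if "c \<in> carrier R" "b = a \<otimes> c" for c
    using that assms(1) by algebra
  moreover have "a \<oplus> b = b \<otimes> (\<one> \<oplus> c)" if "c \<in> carrier R" "a = b \<otimes> c" for c
    using that assms(2) by algebra
  ultimately show ?thesis using divisibility_total[OF assms(1,2)] assms by metis
qed

lemma one_minus_nonunit:
  assumes "r \<in> carrier R" "r \<notin> Units R"
  shows "\<one> \<ominus> r \<in> Units R"
proof (rule ccontr)
  assume "\<one> \<ominus> r \<notin> Units R"
  then have "(\<one> \<ominus> r) \<oplus> r \<notin> Units R" using nonunit_add assms by simp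
  moreover have "(\<one> \<ominus> r) \<oplus> r = \<one>" using assms by algebra
  ultimately show False by simp
qed

lemma nonunit_absorb_zero:
  assumes x: "x \<in> carrier R" and u: "u \<in> carrier R" "u \<notin> Units R" and eq: "x \<otimes> u = x"
  shows "x = \<zero>"
proof -
  have "x \<otimes> (\<one> \<ominus> u) = x \<ominus> x \<otimes> u" using x u(1) by algebra
  then have "x \<otimes> (\<one> \<ominus> u) = \<zero>" using x by (simp add: eq a_minus_def r_neg)
  then show ?thesis using Units_mult_eq_zero[OF x one_minus_nonunit[OF u]] by blast
qed

lemma unit_if_divides_back:
  assumes "d \<in> carrier R" "d \<noteq> \<zero>" "x \<in> carrier R" "u \<in> carrier R" "m \<in> carrier R"
    and "d = x \<otimes> u" "x = d \<otimes> m"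
  shows "u \<in> Units R"
proof (rule ccontr)
  assume "u \<notin> Units R"
  then have "u \<otimes> m \<notin> Units R" using Units_factor assms(4,5) by blast
  moreover have "x \<otimes> (u \<otimes> m) = (x \<otimes> u) \<otimes> m" using assms(3-5) by (simp add: m_assoc)
  moreover have "\<dots> = x" by (simp only: assms(6)[symmetric] assms(7)[symmetric])
  ultimately have "x = \<zero>" using nonunit_absorb_zero[OF assms(3) m_closed[OF assms(4,5)]] by simp
  then show False using assms(2,4,6) by simp
qed

lemma finite_common_divisor:
  assumes "finite G" "G \<subseteq> carrier R"
  shows "\<exists>g\<in>insert \<zero> G. G \<subseteq> PIdl g"
  using assms
proof (induction G rule: finite_induct)
  case empty then show ?case by auto
next
  case (insert h G)
  then obtain g where g: "g \<in> insert \<zero> G" "G \<subseteq> PIdl g" by auto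
  have gh: "g \<in> carrier R" "h \<in> carrier R" using g(1) insert.prems by auto
  from divisibility_total[OF gh] show ?case
  proof
    assume "\<exists>c\<in>carrier R. h = g \<otimes> c"
    then have "h \<in> PIdl g" using gh by (simp add: mem_PIdl_iff)
    then show ?thesis using g by blast
  next
    assume "\<exists>c\<in>carrier R. g = h \<otimes> c"
    then have "PIdl g \<subseteq> PIdl h"
      using gh cgenideal_minimal[OF cgenideal_ideal] by (auto simp: mem_PIdl_iff)
    then show ?thesis using g gh cgenideal_self by auto
  qed
qed

lemma genideal_finite_principal:
  assumes "finite G" "G \<subseteq> carrier R"
  shows "\<exists>g\<in>insert \<zero> G. Idl G = PIdl g"
proof -
  obtain g where g: "g \<in> insert \<zero> G" "G \<subseteq> PIdl g"
    using finite_common_divisor[OF assms] by auto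
  have gc: "g \<in> carrier R" using g assms by auto
  have "Idl G \<subseteq> PIdl g" by (rule genideal_minimal[OF cgenideal_ideal[OF gc] g(2)])
  moreover have "PIdl g \<subseteq> Idl G"
    using g genideal_self[OF assms(2)] genideal_ideal[OF assms(2)] additive_subgroup.zero_closed
    by (intro cgenideal_minimal) (auto simp: ideal_def)
  ultimately show ?thesis using g by auto
qed

lemma ann_swap:
  assumes c: "c \<in> carrier R" "c \<noteq> \<zero>" and d: "d \<in> carrier R" "d \<noteq> \<zero>"
    and ann_d: "ann R d = PIdl c"
  shows "ann R c = PIdl d"
proof
  have "c \<in> ann R d" using ann_d cgenideal_self[OF c(1)] by simp
  then have dc: "d \<otimes> c = \<zero>" by (simp add: ann_def)
  show "PIdl d \<subseteq> ann R c"
  proof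
    fix x assume "x \<in> PIdl d"
    then obtain v where v: "v \<in> carrier R" "x = d \<otimes> v" using d(1) by (auto simp: mem_PIdl_iff)
    have "c \<otimes> x = (d \<otimes> c) \<otimes> v" unfolding v(2) using v(1) c(1) d(1) by (simp add: m_ac)
    then show "x \<in> ann R c" using dc v d(1) by (simp add: ann_def)
  qed
  show "ann R c \<subseteq> PIdl d"
  proof
    fix x assume "x \<in> ann R c"
    then have x: "x \<in> carrier R" "c \<otimes> x = \<zero>" by (auto simp: ann_def)
    from divisibility_total[OF d(1) x(1)] show "x \<in> PIdl d"
    proof
      assume "\<exists>y\<in>carrier R. x = d \<otimes> y"
      then show ?thesis using d by (simp add: mem_PIdl_iff)
    next
      assume "\<exists>y\<in>carrier R. d = x \<otimes> y"
      then obtain y where y: "y \<in> carrier R" "d = x \<otimes> y" by auto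
      from divisibility_total[OF y(1) c(1)] have "y \<in> Units R"
      proof
        assume "\<exists>w\<in>carrier R. c = y \<otimes> w"
        then obtain w where w: "w \<in> carrier R" "c = y \<otimes> w" by auto
        have "d \<otimes> w = (y \<otimes> w) \<otimes> x" unfolding y(2) using x(1) y(1) w(1) by (simp add: m_ac)
        then have "w \<in> ann R d" using w(1) x(2) by (simp add: ann_def flip: w(2))
        then obtain v where v: "v \<in> carrier R" "w = c \<otimes> v" using ann_d c(1) by (auto simp: mem_PIdl_iff)
        have "c = w \<otimes> y" using w y(1) by (simp add: m_comm)
        then show ?thesis using unit_if_divides_back[OF c w(1) y(1) v(1)] v(2) by blast
      next
        assume "\<exists>w\<in>carrier R. y = c \<otimes> w"
        then obtain w where w: "w \<in> carrier R" "y = c \<otimes> w" by auto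
        have "d = (c \<otimes> x) \<otimes> w" unfolding y(2) w(2) using x(1) w(1) c(1) by (simp add: m_ac)
        then show ?thesis using x(2) w(1) d by simp
      qed
      then have "x = d \<otimes> inv y" unfolding y(2) using x(1) y(1) by (simp add: m_assoc)
      then show ?thesis using \<open>y \<in> Units R\<close> d(1) by (auto simp: mem_PIdl_iff)
    qed
  qed
qed

text \<open>If \<open>z\<close> kills \<open>r\<close>, then \<open>z = c w\<close> and \<open>r w = d m\<close>; if \<open>w\<close> is not a multiple of \<open>y\<close>,
  then \<open>y = w u\<close> and \<open>d = (r w) u\<close>, so \<open>u\<close> is a unit.\<close>

lemma ann_divisor:
  assumes c: "c \<in> carrier R" and d: "d \<in> carrier R" "d \<noteq> \<zero>"
    and ann_d: "ann R d = PIdl c" and ann_c: "ann R c = PIdl d"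
    and r: "r \<in> carrier R" and y: "y \<in> carrier R" "d = r \<otimes> y"
  shows "ann R r = PIdl (c \<otimes> y)"
proof
  have "c \<in> ann R d" using ann_d cgenideal_self[OF c] by simp
  then have dc: "d \<otimes> c = \<zero>" by (simp add: ann_def)
  show "PIdl (c \<otimes> y) \<subseteq> ann R r"
  proof
    fix z assume "z \<in> PIdl (c \<otimes> y)"
    then obtain v where v: "v \<in> carrier R" "z = c \<otimes> y \<otimes> v" using c y by (auto simp: mem_PIdl_iff)
    have "r \<otimes> z = (r \<otimes> y \<otimes> c) \<otimes> v" unfolding v(2) using v(1) y(1) c r by (simp add: m_ac)
    then show "z \<in> ann R r" using dc v c y(1) by (simp add: ann_def flip: y(2))
  qed
  show "ann R r \<subseteq> PIdl (c \<otimes> y)"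
  proof
    fix z assume "z \<in> ann R r"
    then have z: "z \<in> carrier R" "r \<otimes> z = \<zero>" by (auto simp: ann_def)
    have "d \<otimes> z = y \<otimes> (r \<otimes> z)" unfolding y(2) using y(1) r z(1) by (simp add: m_ac)
    then have "z \<in> ann R d" using z y(1) by (simp add: ann_def)
    then obtain w where w: "w \<in> carrier R" "z = c \<otimes> w" using ann_d c by (auto simp: mem_PIdl_iff)
    have "c \<otimes> (r \<otimes> w) = r \<otimes> z" unfolding w(2) using c r w(1) by (simp add: m_ac)
    then have "r \<otimes> w \<in> ann R c" using z(2) r w(1) by (simp add: ann_def)
    then obtain m where m: "m \<in> carrier R" "r \<otimes> w = d \<otimes> m" using ann_c d(1) by (auto simp: mem_PIdl_iff)
    from divisibility_total[OF y(1) w(1)] show "z \<in> PIdl (c \<otimes> y)"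
    proof
      assume "\<exists>t\<in>carrier R. w = y \<otimes> t"
      then obtain t where t: "t \<in> carrier R" "w = y \<otimes> t" by auto
      have "z = c \<otimes> y \<otimes> t" unfolding w(2) t(2) using c y(1) t(1) by (simp add: m_assoc)
      then show ?thesis using t(1) c y(1) by (auto simp: mem_PIdl_iff)
    next
      assume "\<exists>u\<in>carrier R. y = w \<otimes> u"
      then obtain u where u: "u \<in> carrier R" "y = w \<otimes> u" by auto
      have "d = (r \<otimes> w) \<otimes> u" unfolding y(2) u(2) using r w(1) u(1) by (simp add: m_assoc)
      then have "u \<in> Units R" using unit_if_divides_back[OF d m_closed[OF r w(1)] u(1) m(1)] m(2) by blast
      then have "z = c \<otimes> y \<otimes> inv u" unfolding w(2) u(2) using c w(1) u(1) by (simp add: m_assoc)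
      then show ?thesis using \<open>u \<in> Units R\<close> c y(1) by (auto simp: mem_PIdl_iff)
    qed
  qed
qed

lemma ann_multiple:
  assumes c: "c \<in> carrier R" "c \<noteq> \<zero>" and d: "d \<in> carrier R" "d \<noteq> \<zero>"
    and ann_d: "ann R d = PIdl c" and ann_c: "ann R c = PIdl d"
    and q: "q \<in> carrier R" "r = d \<otimes> q" and y: "y \<in> carrier R" "c = q \<otimes> y"
  shows "ann R r = PIdl y"
proof
  have "c \<in> ann R d" using ann_d cgenideal_self[OF c(1)] by simp
  then have dc: "d \<otimes> c = \<zero>" by (simp add: ann_def)
  show "PIdl y \<subseteq> ann R r"
  proof
    fix z assume "z \<in> PIdl y"
    then obtain v where v: "v \<in> carrier R" "z = y \<otimes> v" using y by (auto simp: mem_PIdl_iff)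
    have "r \<otimes> z = (d \<otimes> (q \<otimes> y)) \<otimes> v" unfolding v(2) q(2) using v(1) y(1) q(1) d(1) by (simp add: m_ac)
    then show "z \<in> ann R r" using dc v y(1) by (simp add: ann_def flip: y(2))
  qed
  show "ann R r \<subseteq> PIdl y"
  proof
    fix z assume "z \<in> ann R r"
    then have z: "z \<in> carrier R" "r \<otimes> z = \<zero>" by (auto simp: ann_def)
    have "d \<otimes> (q \<otimes> z) = r \<otimes> z" unfolding q(2) using d(1) q(1) z(1) by (simp add: m_assoc)
    then have "q \<otimes> z \<in> ann R d" using z q(1) by (simp add: ann_def)
    then obtain v where v: "v \<in> carrier R" "q \<otimes> z = c \<otimes> v" using ann_d c(1) by (auto simp: mem_PIdl_iff)
    have "q \<otimes> (z \<ominus> y \<otimes> v) = q \<otimes> z \<ominus> (q \<otimes> y) \<otimes> v" using q(1) z(1) y(1) v(1) by algebra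
    also have "\<dots> = \<zero>" unfolding v(2) y(2)[symmetric] using c(1) v(1) by (simp add: a_minus_def r_neg)
    finally have "z \<ominus> y \<otimes> v \<in> ann R q" using z(1) y(1) v(1) by (simp add: ann_def)
    moreover have "ann R q = PIdl (d \<otimes> y)" by (rule ann_divisor[OF d(1) c ann_c ann_d q(1) y])
    ultimately obtain t where t: "t \<in> carrier R" "z \<ominus> y \<otimes> v = d \<otimes> y \<otimes> t"
      using d(1) y(1) by (auto simp: mem_PIdl_iff)
    have "z = (z \<ominus> y \<otimes> v) \<oplus> y \<otimes> v" using z(1) y(1) v(1) by algebra
    also have "\<dots> = y \<otimes> (d \<otimes> t \<oplus> v)" unfolding t(2) using t(1) y(1) v(1) d(1) by algebra
    finally show "z \<in> PIdl y" using y(1) t(1) v(1) d(1) by (auto simp: mem_PIdl_iff)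
  qed
qed

lemma ann_principal:
  assumes c: "c \<in> carrier R" "c \<noteq> \<zero>" and d: "d \<in> carrier R" "d \<noteq> \<zero>"
    and ann_d: "ann R d = PIdl c" and r: "r \<in> carrier R"
  shows "\<exists>a\<in>carrier R. ann R r = PIdl a"
proof -
  have ann_c: "ann R c = PIdl d" by (rule ann_swap[OF c d ann_d])
  from divisibility_total[OF r d(1)] show ?thesis
  proof
    assume "\<exists>y\<in>carrier R. d = r \<otimes> y"
    then show ?thesis using ann_divisor[OF c(1) d ann_d ann_c r] c(1) by blast
  next
    assume "\<exists>q\<in>carrier R. r = d \<otimes> q"
    then obtain q where q: "q \<in> carrier R" "r = d \<otimes> q" by auto
    from divisibility_total[OF q(1) c(1)] show ?thesis
    proof
      assume "\<exists>y\<in>carrier R. c = q \<otimes> y"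
      then show ?thesis using ann_multiple[OF c d ann_d ann_c q] by blast
    next
      assume "\<exists>w\<in>carrier R. q = c \<otimes> w"
      then obtain w where w: "w \<in> carrier R" "q = c \<otimes> w" by auto
      have "c \<in> ann R d" using ann_d cgenideal_self[OF c(1)] by simp
      then have "r = \<zero>" unfolding q(2) w(2) using c(1) d(1) w(1) by (simp add: ann_def m_assoc[symmetric])
      then have "ann R r = PIdl \<one>" by (auto simp: ann_def PIdl_one)
      then show ?thesis by blast
    qed
  qed
qed

end

lemma ideal_module_simps [simp]:
  "carrier (ideal_module R I) = I" "add (ideal_module R I) = add R"
  "zero (ideal_module R I) = zero R" "smult (ideal_module R I) = mult R"
  by (simp_all add: ideal_module_def)

lemma (in ring) abelian_monoid_ideal_module:
  assumes "ideal I R"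
  shows "abelian_monoid (ideal_module R I)"
proof -
  interpret ideal I R by fact
  show ?thesis
    by (rule abelian_monoidI) (auto simp: a_ac dest!: subsetD[OF a_subset])
qed

lemma (in ring) finsum_ideal_module:
  assumes I: "ideal I R" and "finite A" "f \<in> A \<rightarrow> I"
  shows "finsum (ideal_module R I) f A = (\<Oplus>a\<in>A. f a)"
  using assms(2,3)
proof (induction A rule: finite_induct)
  interpret M: abelian_monoid "ideal_module R I" by (rule abelian_monoid_ideal_module[OF I])
  interpret ideal I R by (rule I)
  case empty then show ?case by simp
next
  interpret M: abelian_monoid "ideal_module R I" by (rule abelian_monoid_ideal_module[OF I])
  interpret ideal I R by (rule I)
  case (insert a A)
  then have "f \<in> A \<rightarrow> carrier R" "f a \<in> carrier R" using a_subset by auto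
  then show ?case using insert M.finsum_insert[of A a f] by (simp add: finsum_insert)
qed

context cring
begin

lemma fvec_1_iff: "x \<in> fvec R 1 \<longleftrightarrow> x 0 \<in> carrier R \<and> x = (\<lambda>j. if j = 0 then x 0 else \<zero>)"
  unfolding fvec_def by (auto simp: fun_eq_iff)

lemma lincomb_PIdl_1:
  assumes r: "r \<in> carrier R" and x0: "x 0 \<in> carrier R"
  shows "lincomb (ideal_module R (PIdl r)) 1 (\<lambda>_. r) x = r \<otimes> x 0"
proof -
  have "x 0 \<otimes> r \<in> PIdl r" by (rule ideal.I_l_closed[OF cgenideal_ideal[OF r] cgenideal_self[OF r] x0])
  then have "lincomb (ideal_module R (PIdl r)) 1 (\<lambda>_. r) x = (\<Oplus>j\<in>{0}. x j \<otimes> r)"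
    unfolding lincomb_def using finsum_ideal_module[OF cgenideal_ideal[OF r], of "{0}" "\<lambda>j. x j \<otimes> r"]
    by (simp add: lessThan_Suc)
  also have "\<dots> = r \<otimes> x 0" using x0 r by (simp add: m_comm)
  finally show ?thesis .
qed

lemma matvec_1_1:
  "a \<in> carrier R \<Longrightarrow> x 0 \<in> carrier R \<Longrightarrow> matvec R (\<lambda>_ _. a) 1 1 x = (\<lambda>i. if i = 0 then a \<otimes> x 0 else \<zero>)"
  unfolding matvec_def by (auto simp: lessThan_Suc fun_eq_iff)

text \<open>The presentation \<open>0 \<rightarrow> ann r \<rightarrow> R \<rightarrow> r R \<rightarrow> 0\<close>.\<close>

lemma lambda_ge_1_PIdl:
  assumes r: "r \<in> carrier R" and a: "a \<in> carrier R" and ann_r: "ann R r = PIdl a"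
  shows "lambda_ge R (ideal_module R (PIdl r)) 1"
  unfolding lambda_ge_def
proof (intro exI[of _ "\<lambda>_. 1"] exI[of _ "\<lambda>_ _ _. a"] exI[of _ "\<lambda>_. r"] conjI)
  let ?single = "\<lambda>v j. if j = (0::nat) then v else \<zero>"
  show "\<forall>y\<in>carrier (ideal_module R (PIdl r)). \<exists>x\<in>fvec R 1. y = lincomb (ideal_module R (PIdl r)) 1 (\<lambda>_. r) x"
  proof
    fix y assume "y \<in> carrier (ideal_module R (PIdl r))"
    then obtain v where v: "v \<in> carrier R" "y = r \<otimes> v" using r by (auto simp: mem_PIdl_iff)
    then have "?single v \<in> fvec R 1" "y = lincomb (ideal_module R (PIdl r)) 1 (\<lambda>_. r) (?single v)"
      using fvec_1_iff[of "?single v"] lincomb_PIdl_1[OF r, of "?single v"] by auto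
    then show "\<exists>x\<in>fvec R 1. y = lincomb (ideal_module R (PIdl r)) 1 (\<lambda>_. r) x" by blast
  qed
  show "1 \<le> (1::nat) \<longrightarrow> (\<forall>x\<in>fvec R 1. (lincomb (ideal_module R (PIdl r)) 1 (\<lambda>_. r) x = \<zero>\<^bsub>ideal_module R (PIdl r)\<^esub>) =
      (\<exists>z\<in>fvec R 1. x = matvec R (\<lambda>_ _. a) 1 1 z))"
  proof (intro impI ballI)
    fix x assume "x \<in> fvec R 1"
    then have x: "x 0 \<in> carrier R" "x = ?single (x 0)" using fvec_1_iff by auto
    have "lincomb (ideal_module R (PIdl r)) 1 (\<lambda>_. r) x = \<zero>\<^bsub>ideal_module R (PIdl r)\<^esub> \<longleftrightarrow> x 0 \<in> PIdl a"
      using lincomb_PIdl_1[of r x, OF r x(1)] x(1) ann_r[symmetric] by (simp add: ann_def)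
    also have "\<dots> \<longleftrightarrow> (\<exists>v\<in>carrier R. x = ?single (a \<otimes> v))"
    proof -
      have "x = ?single w \<longleftrightarrow> x 0 = w" for w
      proof
        assume "x 0 = w"
        show "x = ?single w" by (subst x(2)) (simp add: \<open>x 0 = w\<close> cong: if_cong)
      qed simp
      then show ?thesis using a by (simp add: mem_PIdl_iff)
    qed
    also have "\<dots> \<longleftrightarrow> (\<exists>z\<in>fvec R 1. x = matvec R (\<lambda>_ _. a) 1 1 z)"
    proof
      assume "\<exists>v\<in>carrier R. x = ?single (a \<otimes> v)"
      then obtain v where v: "v \<in> carrier R" "x = ?single (a \<otimes> v)" by blast
      then have "?single v \<in> fvec R 1" "x = matvec R (\<lambda>_ _. a) 1 1 (?single v)"
        using fvec_1_iff[of "?single v"] matvec_1_1[OF a, of "?single v"] by auto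
      then show "\<exists>z\<in>fvec R 1. x = matvec R (\<lambda>_ _. a) 1 1 z" by blast
    next
      assume "\<exists>z\<in>fvec R 1. x = matvec R (\<lambda>_ _. a) 1 1 z"
      then obtain z where "z \<in> fvec R 1" "x = matvec R (\<lambda>_ _. a) 1 1 z" by blast
      then have "z 0 \<in> carrier R" "x = ?single (a \<otimes> z 0)" using fvec_1_iff matvec_1_1[OF a] by auto
      then show "\<exists>v\<in>carrier R. x = ?single (a \<otimes> v)" by blast
    qed
    finally show "(lincomb (ideal_module R (PIdl r)) 1 (\<lambda>_. r) x = \<zero>\<^bsub>ideal_module R (PIdl r)\<^esub>) =
      (\<exists>z\<in>fvec R 1. x = matvec R (\<lambda>_ _. a) 1 1 z)" .
  qed
qed (use cgenideal_self[OF r] a in auto)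

end

context chain_ring
begin

lemma fg_ideal_principal:
  assumes I: "ideal I R" and fg: "lambda_ge R (ideal_module R I) 0"
  shows "\<exists>r\<in>carrier R. I = PIdl r"
proof -
  interpret ideal I R by (rule I)
  obtain k :: "nat \<Rightarrow> nat" and g where g: "\<forall>j<k 0. g j \<in> I"
    and gen: "\<forall>y\<in>I. \<exists>x\<in>fvec R (k 0). y = lincomb (ideal_module R I) (k 0) g x"
    using fg unfolding lambda_ge_def by auto
  have gc: "g ` {..<k 0} \<subseteq> carrier R" using g a_subset by auto
  obtain r where r: "r \<in> insert \<zero> (g ` {..<k 0})" "g ` {..<k 0} \<subseteq> PIdl r"
    using finite_common_divisor[OF _ gc] by blast
  have rI: "r \<in> I" using r(1) g by auto
  then have rc: "r \<in> carrier R" using a_subset by auto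
  have "\<forall>j\<in>{..<k 0}. \<exists>v. v \<in> carrier R \<and> g j = r \<otimes> v"
  proof
    fix j assume "j \<in> {..<k 0}"
    then have "g j \<in> PIdl r" using r(2) by blast
    then show "\<exists>v. v \<in> carrier R \<and> g j = r \<otimes> v" unfolding mem_PIdl_iff[OF rc] by blast
  qed
  then have "\<exists>c. \<forall>j\<in>{..<k 0}. c j \<in> carrier R \<and> g j = r \<otimes> c j" by (rule bchoice)
  then obtain c where c: "\<forall>j\<in>{..<k 0}. c j \<in> carrier R \<and> g j = r \<otimes> c j" by blast
  have "I \<subseteq> PIdl r"
  proof
    fix y assume "y \<in> I"
    then obtain x where x: "x \<in> fvec R (k 0)" "y = lincomb (ideal_module R I) (k 0) g x" using gen by blast
    have xc: "x j \<in> carrier R" if "j < k 0" for j using x(1) that by (simp add: fvec_def)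
    have "y = (\<Oplus>j\<in>{..<k 0}. x j \<otimes> g j)"
      using x(2) g xc finsum_ideal_module[OF I, of "{..<k 0}" "\<lambda>j. x j \<otimes> g j"]
      by (simp add: lincomb_def I_l_closed)
    also have "\<dots> = (\<Oplus>j\<in>{..<k 0}. r \<otimes> (x j \<otimes> c j))"
      using xc c rc by (intro finsum_cong') (auto simp: m_lcomm)
    also have "\<dots> = r \<otimes> (\<Oplus>j\<in>{..<k 0}. x j \<otimes> c j)"
      using xc c rc by (intro finsum_rdistr[symmetric]) auto
    finally have "y = r \<otimes> (\<Oplus>j\<in>{..<k 0}. x j \<otimes> c j)" .
    moreover have "(\<Oplus>j\<in>{..<k 0}. x j \<otimes> c j) \<in> carrier R" using xc c by (intro finsum_closed) auto
    ultimately show "y \<in> PIdl r" unfolding mem_PIdl_iff[OF rc] by blast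
  qed
  moreover have "PIdl r \<subseteq> I" by (rule cgenideal_minimal[OF I rI])
  ultimately show ?thesis using rc by blast
qed

lemma coherent_if_ann_principal:
  assumes "c \<in> carrier R" "c \<noteq> \<zero>" "d \<in> carrier R" "d \<noteq> \<zero>" "ann R d = PIdl c"
  shows "coherent_ring R"
  unfolding coherent_ring_def
proof (intro allI impI)
  fix I assume "ideal I R" "lambda_ge R (ideal_module R I) 0"
  then obtain r where r: "r \<in> carrier R" "I = PIdl r" using fg_ideal_principal by blast
  obtain a where "a \<in> carrier R" "ann R r = PIdl a" using ann_principal[OF assms r(1)] by blast
  then show "lambda_ge R (ideal_module R I) 1" using lambda_ge_1_PIdl r by simp
qed

lemma fg_ann_trivial_if_noncoherent:
  assumes "\<not> coherent_ring R" and p: "p \<in> carrier R" "p \<noteq> \<zero>"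
    and G: "finite G" "G \<subseteq> carrier R" and ann_p: "ann R p = Idl G"
  shows "ann R p = {\<zero>}"
proof -
  obtain g where g: "g \<in> insert \<zero> G" "Idl G = PIdl g" using genideal_finite_principal[OF G] by blast
  have gc: "g \<in> carrier R" using g(1) G(2) by auto
  show ?thesis
  proof (cases "g = \<zero>")
    case True
    then show ?thesis using ann_p g(2) PIdl_zero by simp
  next
    case False
    then show ?thesis using coherent_if_ann_principal[OF gc False p] ann_p g(2) assms(1) by simp
  qed
qed

end

locale fg_ann_trivial_chain_ring = chain_ring +
  assumes fg_ann_trivial:
    "\<lbrakk>p \<in> carrier R; p \<noteq> \<zero>; finite G; G \<subseteq> carrier R; ann R p = Idl G\<rbrakk> \<Longrightarrow> ann R p = {\<zero>}"

lemma fg_ann_trivial_chain_ringI: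
  assumes V: "valuation_ring V" and dom_or_nc: "domain V \<or> \<not> coherent_ring V"
  shows "fg_ann_trivial_chain_ring V"
proof -
  interpret cring V using V by (simp add: valuation_ring_def)
  interpret chain_ring V
  proof
    fix a b assume a: "a \<in> carrier V" and b: "b \<in> carrier V"
    have "PIdl\<^bsub>V\<^esub> a \<subseteq> PIdl\<^bsub>V\<^esub> b \<or> PIdl\<^bsub>V\<^esub> b \<subseteq> PIdl\<^bsub>V\<^esub> a"
      using V cgenideal_ideal[OF a] cgenideal_ideal[OF b] by (simp add: valuation_ring_def)
    then have "a \<in> PIdl\<^bsub>V\<^esub> b \<or> b \<in> PIdl\<^bsub>V\<^esub> a" using cgenideal_self[OF a] cgenideal_self[OF b] by blast
    then show "(\<exists>c\<in>carrier V. b = a \<otimes>\<^bsub>V\<^esub> c) \<or> (\<exists>c\<in>carrier V. a = b \<otimes>\<^bsub>V\<^esub> c)"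
      using mem_PIdl_iff[OF a] mem_PIdl_iff[OF b] by blast
  qed
  show ?thesis
  proof unfold_locales
    fix p G assume p: "p \<in> carrier V" "p \<noteq> \<zero>\<^bsub>V\<^esub>" and G: "finite G" "G \<subseteq> carrier V"
      and ann_p: "ann V p = Idl\<^bsub>V\<^esub> G"
    from dom_or_nc show "ann V p = {\<zero>\<^bsub>V\<^esub>}"
    proof
      assume "domain V"
      then show ?thesis using domain.integral[of V p] p by (auto simp: ann_def)
    next
      assume "\<not> coherent_ring V"
      then show ?thesis using fg_ann_trivial_if_noncoherent p G ann_p by blast
    qed
  qed
qed

section \<open>Vectors, column operations and kernels\<close>

definition vecs :: "('a, 'm) ring_scheme \<Rightarrow> nat set \<Rightarrow> (nat \<Rightarrow> 'a) set" where
  "vecs R J = {x. (\<forall>j\<in>J. x j \<in> carrier R) \<and> (\<forall>j. j \<notin> J \<longrightarrow> x j = \<zero>\<^bsub>R\<^esub>)}"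

definition vzero :: "('a, 'm) ring_scheme \<Rightarrow> nat \<Rightarrow> 'a" where
  "vzero R = (\<lambda>_. \<zero>\<^bsub>R\<^esub>)"

definition vadd :: "('a, 'm) ring_scheme \<Rightarrow> (nat \<Rightarrow> 'a) \<Rightarrow> (nat \<Rightarrow> 'a) \<Rightarrow> nat \<Rightarrow> 'a" where
  "vadd R x y = (\<lambda>j. x j \<oplus>\<^bsub>R\<^esub> y j)"

definition vsmult :: "('a, 'm) ring_scheme \<Rightarrow> 'a \<Rightarrow> (nat \<Rightarrow> 'a) \<Rightarrow> nat \<Rightarrow> 'a" where
  "vsmult R c x = (\<lambda>j. c \<otimes>\<^bsub>R\<^esub> x j)"

definition unit_vec :: "('a, 'm) ring_scheme \<Rightarrow> nat \<Rightarrow> nat \<Rightarrow> 'a" where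
  "unit_vec R c = (\<lambda>d. if d = c then \<one>\<^bsub>R\<^esub> else \<zero>\<^bsub>R\<^esub>)"

inductive_set vspan :: "('a, 'm) ring_scheme \<Rightarrow> (nat \<Rightarrow> 'a) set \<Rightarrow> (nat \<Rightarrow> 'a) set"
  for R G where
  vspan_zero: "vzero R \<in> vspan R G"
| vspan_gen: "g \<in> G \<Longrightarrow> g \<in> vspan R G"
| vspan_add: "x \<in> vspan R G \<Longrightarrow> y \<in> vspan R G \<Longrightarrow> vadd R x y \<in> vspan R G"
| vspan_smult: "c \<in> carrier R \<Longrightarrow> x \<in> vspan R G \<Longrightarrow> vsmult R c x \<in> vspan R G"

definition linear_endo :: "('a, 'm) ring_scheme \<Rightarrow> nat set \<Rightarrow> ((nat \<Rightarrow> 'a) \<Rightarrow> nat \<Rightarrow> 'a) \<Rightarrow> bool" where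
  "linear_endo R J f \<longleftrightarrow> (\<forall>x\<in>vecs R J. f x \<in> vecs R J) \<and>
     (\<forall>x\<in>vecs R J. \<forall>y\<in>vecs R J. f (vadd R x y) = vadd R (f x) (f y)) \<and>
     (\<forall>c\<in>carrier R. \<forall>x\<in>vecs R J. f (vsmult R c x) = vsmult R c (f x))"

context cring
begin

lemma vecs_vzero [simp]: "vzero R \<in> vecs R J"
  unfolding vecs_def vzero_def by auto

lemma vecs_vadd [simp]: "x \<in> vecs R J \<Longrightarrow> y \<in> vecs R J \<Longrightarrow> vadd R x y \<in> vecs R J"
  unfolding vecs_def vadd_def by auto

lemma vecs_vsmult [simp]: "c \<in> carrier R \<Longrightarrow> x \<in> vecs R J \<Longrightarrow> vsmult R c x \<in> vecs R J"
  unfolding vecs_def vsmult_def by auto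

lemma vecs_carrier: "x \<in> vecs R J \<Longrightarrow> x l \<in> carrier R"
  unfolding vecs_def by (cases "l \<in> J") auto

lemma vecs_unit_vec: "c \<in> J \<Longrightarrow> unit_vec R c \<in> vecs R J"
  unfolding unit_vec_def vecs_def by auto

lemma vecs_mono: "J' \<subseteq> J \<Longrightarrow> vecs R J' \<subseteq> vecs R J"
  unfolding vecs_def by auto

lemma vecs_upd_zero: "x \<in> vecs R J \<Longrightarrow> x(j := \<zero>) \<in> vecs R (J - {j})"
  unfolding vecs_def by auto

lemma vspan_subset_vecs:
  assumes "G \<subseteq> vecs R J"
  shows "vspan R G \<subseteq> vecs R J"
proof
  fix x assume "x \<in> vspan R G"
  then show "x \<in> vecs R J" by (induction rule: vspan.induct) (use assms in auto)
qed

lemma linear_endo_vzero: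
  assumes "linear_endo R J f"
  shows "f (vzero R) = vzero R"
proof -
  have "f (vzero R) \<in> vecs R J" using assms unfolding linear_endo_def by auto
  then have "vsmult R \<zero> (f (vzero R)) = vzero R"
    unfolding vsmult_def vzero_def by (auto simp: fun_eq_iff vecs_carrier)
  moreover have "vsmult R \<zero> (vzero R) = vzero R" unfolding vsmult_def vzero_def by auto
  ultimately show ?thesis using assms unfolding linear_endo_def by (metis vecs_vzero zero_closed)
qed

lemma linear_endo_comp:
  "linear_endo R J f \<Longrightarrow> linear_endo R J g \<Longrightarrow> linear_endo R J (f \<circ> g)"
  unfolding linear_endo_def by auto

lemma linear_endo_vzero_map: "linear_endo R J (\<lambda>x. vzero R)"
  unfolding linear_endo_def vadd_def vsmult_def vzero_def vecs_def by auto

lemma vspan_linear_image: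
  assumes f: "linear_endo R J f" and G: "G \<subseteq> vecs R J" and x: "x \<in> vspan R G"
  shows "f x \<in> vspan R (f ` G)"
  using x
proof (induction rule: vspan.induct)
  case vspan_zero
  then show ?case using linear_endo_vzero[OF f] vspan.vspan_zero by metis
next
  case (vspan_gen g)
  then show ?case by (auto intro: vspan.vspan_gen)
next
  case (vspan_add x y)
  then have "x \<in> vecs R J" "y \<in> vecs R J" using vspan_subset_vecs[OF G] by auto
  then show ?case using vspan_add.IH f unfolding linear_endo_def by (auto intro: vspan.vspan_add)
next
  case (vspan_smult c x)
  then have "x \<in> vecs R J" using vspan_subset_vecs[OF G] by auto
  then show ?case using vspan_smult f unfolding linear_endo_def by (auto intro: vspan.vspan_smult)
qed

lemma vspan_coord_genideal:
  assumes G: "G \<subseteq> vecs R J" and x: "x \<in> vspan R G"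
  shows "x j \<in> Idl ((\<lambda>v. v j) ` G)"
proof -
  have sub: "(\<lambda>v. v j) ` G \<subseteq> carrier R" using G vecs_carrier by auto
  interpret ideal "Idl ((\<lambda>v. v j) ` G)" R by (rule genideal_ideal[OF sub])
  from x show ?thesis
  proof (induction rule: vspan.induct)
    case (vspan_gen g)
    then show ?case using genideal_self[OF sub] by auto
  next
    case (vspan_smult c x)
    then show ?case by (simp add: vsmult_def I_l_closed)
  qed (simp_all add: vzero_def vadd_def additive_subgroup.a_closed[OF additive_subgroup_axioms])
qed

lemma vspan_finsum:
  assumes "finite L" "\<forall>l\<in>L. \<beta> l \<in> carrier R" "\<forall>l\<in>L. g l \<in> G" "G \<subseteq> vecs R J"
  shows "(\<lambda>c. \<Oplus>l\<in>L. \<beta> l \<otimes> g l c) \<in> vspan R G"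
  using assms
proof (induction L rule: finite_induct)
  case empty
  have "(\<lambda>c. \<Oplus>l\<in>{}. \<beta> l \<otimes> g l c) = vzero R" unfolding vzero_def by simp
  then show ?case using vspan.vspan_zero by metis
next
  case (insert l0 L)
  have gc: "\<And>l c. l \<in> insert l0 L \<Longrightarrow> g l c \<in> carrier R" using insert vecs_carrier by blast
  have "(\<lambda>c. \<Oplus>l\<in>insert l0 L. \<beta> l \<otimes> g l c) =
      vadd R (vsmult R (\<beta> l0) (g l0)) (\<lambda>c. \<Oplus>l\<in>L. \<beta> l \<otimes> g l c)"
    unfolding vadd_def vsmult_def using insert gc by (auto simp: fun_eq_iff Pi_def)
  moreover have "vsmult R (\<beta> l0) (g l0) \<in> vspan R G"
    using insert by (auto intro: vspan.vspan_gen vspan.vspan_smult)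
  moreover have "(\<lambda>c. \<Oplus>l\<in>L. \<beta> l \<otimes> g l c) \<in> vspan R G" using insert by auto
  ultimately show ?case by (auto intro: vspan.vspan_add)
qed

lemma linear_endo_expand:
  assumes f: "linear_endo R J f" and fin: "finite J" and y: "y \<in> vecs R J"
  shows "f y = (\<lambda>r. \<Oplus>c\<in>J. y c \<otimes> f (unit_vec R c) r)"
proof -
  have fv: "\<And>x. x \<in> vecs R J \<Longrightarrow> f x \<in> vecs R J" using f unfolding linear_endo_def by auto
  have restrict: "C \<subseteq> J \<Longrightarrow> f (\<lambda>d. if d \<in> C then y d else \<zero>) = (\<lambda>r. \<Oplus>c\<in>C. y c \<otimes> f (unit_vec R c) r)" for C
  proof (induction C rule: infinite_finite_induct)
    case (infinite C) then show ?case using fin finite_subset by blast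
  next
    case empty
    have "(\<lambda>d. if d \<in> {} then y d else \<zero>) = vzero R" unfolding vzero_def by simp
    then show ?case using linear_endo_vzero[OF f] unfolding vzero_def by simp
  next
    case (insert c C)
    have cJ: "c \<in> J" and CJ: "C \<subseteq> J" using insert by auto
    have yc: "y c \<in> carrier R" using y vecs_carrier by auto
    have rest: "(\<lambda>d. if d \<in> C then y d else \<zero>) \<in> vecs R J" using y CJ unfolding vecs_def by auto
    have "(\<lambda>d. if d \<in> insert c C then y d else \<zero>) =
        vadd R (vsmult R (y c) (unit_vec R c)) (\<lambda>d. if d \<in> C then y d else \<zero>)"
      unfolding vadd_def vsmult_def unit_vec_def using insert yc y by (auto simp: fun_eq_iff vecs_carrier)
    then have "f (\<lambda>d. if d \<in> insert c C then y d else \<zero>) =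
        vadd R (vsmult R (y c) (f (unit_vec R c))) (f (\<lambda>d. if d \<in> C then y d else \<zero>))"
      using f vecs_unit_vec[OF cJ] rest yc unfolding linear_endo_def by auto
    also have "\<dots> = (\<lambda>r. \<Oplus>c\<in>insert c C. y c \<otimes> f (unit_vec R c) r)"
    proof (rule ext)
      fix r
      have "y c' \<otimes> f (unit_vec R c') r \<in> carrier R" if "c' \<in> J" for c'
        using vecs_carrier[OF y] vecs_carrier[OF fv[OF vecs_unit_vec[OF that]]] by simp
      then have "(\<Oplus>c'\<in>insert c C. y c' \<otimes> f (unit_vec R c') r) =
          y c \<otimes> f (unit_vec R c) r \<oplus> (\<Oplus>c'\<in>C. y c' \<otimes> f (unit_vec R c') r)"
        using CJ cJ by (intro finsum_insert[OF insert.hyps(1,2)]) auto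
      then show "vadd R (vsmult R (y c) (f (unit_vec R c))) (f (\<lambda>d. if d \<in> C then y d else \<zero>)) r =
          (\<Oplus>c'\<in>insert c C. y c' \<otimes> f (unit_vec R c') r)"
        unfolding vadd_def vsmult_def using insert.IH[OF CJ] by simp
    qed
    finally show ?case .
  qed
  have "(\<lambda>d. if d \<in> J then y d else \<zero>) = y" using y unfolding vecs_def by auto
  then show ?thesis using restrict[of J] by simp
qed

end

text \<open>Matrices are stored by columns: \<open>a l\<close> is the column indexed by \<open>l \<in> J\<close>, of height \<open>m\<close>.\<close>

definition colcomb ::
    "('a, 'm) ring_scheme \<Rightarrow> (nat \<Rightarrow> nat \<Rightarrow> 'a) \<Rightarrow> nat \<Rightarrow> nat set \<Rightarrow> (nat \<Rightarrow> 'a) \<Rightarrow> nat \<Rightarrow> 'a" where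
  "colcomb R a m J x = (\<lambda>i. if i < m then (\<Oplus>\<^bsub>R\<^esub> l\<in>J. a l i \<otimes>\<^bsub>R\<^esub> x l) else \<zero>\<^bsub>R\<^esub>)"

definition colker :: "('a, 'm) ring_scheme \<Rightarrow> (nat \<Rightarrow> nat \<Rightarrow> 'a) \<Rightarrow> nat \<Rightarrow> nat set \<Rightarrow> (nat \<Rightarrow> 'a) set" where
  "colker R a m J = {x \<in> vecs R J. colcomb R a m J x = vzero R}"

definition fin_gen :: "('a, 'm) ring_scheme \<Rightarrow> (nat \<Rightarrow> 'a) set \<Rightarrow> bool" where
  "fin_gen R K \<longleftrightarrow> (\<exists>G. finite G \<and> G \<subseteq> K \<and> K \<subseteq> vspan R G)"

definition splits_kernel ::
    "('a, 'm) ring_scheme \<Rightarrow> (nat \<Rightarrow> nat \<Rightarrow> 'a) \<Rightarrow> nat \<Rightarrow> nat set \<Rightarrow> ((nat \<Rightarrow> 'a) \<Rightarrow> nat \<Rightarrow> 'a) \<Rightarrow> bool" where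
  "splits_kernel R a m J f \<longleftrightarrow> linear_endo R J f \<and>
     (\<forall>x\<in>vecs R J. colcomb R a m J (f x) = colcomb R a m J x) \<and> (\<forall>x\<in>colker R a m J. f x = vzero R)"

definition transvection ::
    "('a, 'm) ring_scheme \<Rightarrow> nat \<Rightarrow> nat set \<Rightarrow> (nat \<Rightarrow> 'a) \<Rightarrow> 'a \<Rightarrow> (nat \<Rightarrow> 'a) \<Rightarrow> nat \<Rightarrow> 'a" where
  "transvection R j J c s x = x(j := x j \<oplus>\<^bsub>R\<^esub> s \<otimes>\<^bsub>R\<^esub> (\<Oplus>\<^bsub>R\<^esub> l\<in>J. c l \<otimes>\<^bsub>R\<^esub> x l))"

context cring
begin

lemma finsum_minus:
  assumes "finite A" "f \<in> A \<rightarrow> carrier R" "g \<in> A \<rightarrow> carrier R"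
  shows "(\<Oplus>l\<in>A. f l \<ominus> g l) = (\<Oplus>l\<in>A. f l) \<ominus> (\<Oplus>l\<in>A. g l)"
  using assms
proof (induction A rule: finite_induct)
  case empty then show ?case by simp algebra
next
  case (insert a A)
  have fa: "f a \<in> carrier R" "g a \<in> carrier R" and fA: "f \<in> A \<rightarrow> carrier R" "g \<in> A \<rightarrow> carrier R"
    using insert by auto
  have s: "(\<Oplus>l\<in>A. f l) \<in> carrier R" "(\<Oplus>l\<in>A. g l) \<in> carrier R" using fA by auto
  have "(\<Oplus>l\<in>insert a A. f l \<ominus> g l) = (f a \<ominus> g a) \<oplus> ((\<Oplus>l\<in>A. f l) \<ominus> (\<Oplus>l\<in>A. g l))"
    using insert fA fa by (simp add: Pi_def)
  also have "\<dots> = (f a \<oplus> (\<Oplus>l\<in>A. f l)) \<ominus> (g a \<oplus> (\<Oplus>l\<in>A. g l))" using fa s by algebra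
  also have "\<dots> = (\<Oplus>l\<in>insert a A. f l) \<ominus> (\<Oplus>l\<in>insert a A. g l)" using insert fA fa by simp
  finally show ?case .
qed

lemma colcomb_cong:
  assumes "\<forall>l\<in>J. \<forall>i<m. a l i \<in> carrier R" "\<forall>l\<in>J. y l \<in> carrier R" "\<And>l. l \<in> J \<Longrightarrow> x l = y l"
  shows "colcomb R a m J x = colcomb R a m J y"
  unfolding colcomb_def using assms by (auto intro!: finsum_cong' simp: fun_eq_iff)

lemma colcomb_vecs:
  assumes "\<forall>l\<in>J. \<forall>i<m. a l i \<in> carrier R" "x \<in> vecs R J'"
  shows "colcomb R a m J x \<in> vecs R {..<m}"
  unfolding vecs_def colcomb_def using assms by (auto intro!: finsum_closed simp: vecs_carrier)

lemma colcomb_vsmult: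
  assumes "\<forall>l\<in>J. \<forall>i<m. a l i \<in> carrier R" "x \<in> vecs R J'" "u \<in> carrier R" "finite J"
  shows "colcomb R a m J (vsmult R u x) = vsmult R u (colcomb R a m J x)"
proof -
  have "(\<Oplus>l\<in>J. a l i \<otimes> (u \<otimes> x l)) = u \<otimes> (\<Oplus>l\<in>J. a l i \<otimes> x l)" if "i < m" for i
  proof -
    have "(\<Oplus>l\<in>J. a l i \<otimes> (u \<otimes> x l)) = (\<Oplus>l\<in>J. u \<otimes> (a l i \<otimes> x l))"
      using assms that by (intro finsum_cong') (auto simp: m_lcomm vecs_carrier)
    also have "\<dots> = u \<otimes> (\<Oplus>l\<in>J. a l i \<otimes> x l)"
      using assms that by (intro finsum_rdistr[symmetric]) (auto simp: vecs_carrier)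
    finally show ?thesis .
  qed
  then show ?thesis unfolding colcomb_def vsmult_def using assms(3) by (auto simp: fun_eq_iff)
qed

lemma colcomb_vanishing:
  assumes "\<forall>l\<in>J. \<forall>i<m. a l i \<in> carrier R \<and> a l i \<otimes> x l = \<zero>"
  shows "colcomb R a m J x = vzero R"
proof -
  have "(\<Oplus>l\<in>J. a l i \<otimes> x l) = (\<Oplus>l\<in>J. \<zero>)" if "i < m" for i
    using assms that by (intro finsum_cong') auto
  then show ?thesis unfolding colcomb_def vzero_def by (auto simp: fun_eq_iff)
qed

lemma colcomb_insert:
  assumes "finite J" "j \<notin> J" "\<forall>l\<in>insert j J. \<forall>i<m. a l i \<in> carrier R" "x \<in> vecs R J'"
  shows "colcomb R a m (insert j J) x = vadd R (\<lambda>i. if i < m then a j i \<otimes> x j else \<zero>) (colcomb R a m J x)"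
  unfolding colcomb_def vadd_def using assms by (auto simp: fun_eq_iff Pi_def vecs_carrier)

lemma transvection_vecs:
  assumes "j \<in> J" "c \<in> J' \<rightarrow> carrier R" "s \<in> carrier R" "x \<in> vecs R J"
  shows "transvection R j J' c s x \<in> vecs R J"
proof -
  have "(\<Oplus>l\<in>J'. c l \<otimes> x l) \<in> carrier R" using assms by (auto intro!: finsum_closed simp: vecs_carrier)
  then show ?thesis using assms vecs_carrier[OF assms(4)] unfolding transvection_def vecs_def by auto
qed

lemma linear_endo_transvection:
  assumes "finite J'" "j \<in> J" "c \<in> J' \<rightarrow> carrier R" "s \<in> carrier R"
  shows "linear_endo R J (transvection R j J' c s)"
  unfolding linear_endo_def
proof (intro conjI ballI)
  fix x y assume x: "x \<in> vecs R J" and y: "y \<in> vecs R J"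
  have "(\<Oplus>l\<in>J'. c l \<otimes> (x l \<oplus> y l)) = (\<Oplus>l\<in>J'. c l \<otimes> x l \<oplus> c l \<otimes> y l)"
    using assms x y by (intro finsum_cong') (auto simp: r_distr vecs_carrier Pi_def)
  also have "\<dots> = (\<Oplus>l\<in>J'. c l \<otimes> x l) \<oplus> (\<Oplus>l\<in>J'. c l \<otimes> y l)"
    using assms x y by (intro finsum_addf) (auto simp: vecs_carrier)
  finally have e: "(\<Oplus>l\<in>J'. c l \<otimes> (x l \<oplus> y l)) = (\<Oplus>l\<in>J'. c l \<otimes> x l) \<oplus> (\<Oplus>l\<in>J'. c l \<otimes> y l)" .
  have "(\<Oplus>l\<in>J'. c l \<otimes> x l) \<in> carrier R" "(\<Oplus>l\<in>J'. c l \<otimes> y l) \<in> carrier R"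
    using assms x y by (auto intro!: finsum_closed simp: vecs_carrier)
  moreover have "x j \<in> carrier R" "y j \<in> carrier R" using x y vecs_carrier by auto
  moreover have "\<lbrakk>a \<in> carrier R; b \<in> carrier R; u \<in> carrier R; v \<in> carrier R\<rbrakk> \<Longrightarrow>
      (a \<oplus> b) \<oplus> s \<otimes> (u \<oplus> v) = (a \<oplus> s \<otimes> u) \<oplus> (b \<oplus> s \<otimes> v)" for a b u v
    using assms(4) by algebra
  ultimately show "transvection R j J' c s (vadd R x y) = vadd R (transvection R j J' c s x) (transvection R j J' c s y)"
    unfolding transvection_def vadd_def using e by (auto simp: fun_eq_iff)
next
  fix k x assume k: "k \<in> carrier R" and x: "x \<in> vecs R J"
  have "(\<Oplus>l\<in>J'. c l \<otimes> (k \<otimes> x l)) = (\<Oplus>l\<in>J'. k \<otimes> (c l \<otimes> x l))"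
    using assms x k by (intro finsum_cong') (auto simp: m_lcomm vecs_carrier Pi_def)
  also have "\<dots> = k \<otimes> (\<Oplus>l\<in>J'. c l \<otimes> x l)"
    using assms x k by (intro finsum_rdistr[symmetric]) (auto simp: vecs_carrier)
  finally have e: "(\<Oplus>l\<in>J'. c l \<otimes> (k \<otimes> x l)) = k \<otimes> (\<Oplus>l\<in>J'. c l \<otimes> x l)" .
  have "(\<Oplus>l\<in>J'. c l \<otimes> x l) \<in> carrier R" using assms x by (auto intro!: finsum_closed simp: vecs_carrier)
  moreover have "x j \<in> carrier R" using x vecs_carrier by auto
  moreover have "\<lbrakk>a \<in> carrier R; u \<in> carrier R\<rbrakk> \<Longrightarrow> k \<otimes> a \<oplus> s \<otimes> (k \<otimes> u) = k \<otimes> (a \<oplus> s \<otimes> u)" for a u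
    using assms(4) k by algebra
  ultimately show "transvection R j J' c s (vsmult R k x) = vsmult R k (transvection R j J' c s x)"
    unfolding transvection_def vsmult_def using e by (auto simp: fun_eq_iff)
qed (use assms transvection_vecs in auto)

lemma transvection_inverse:
  assumes "j \<notin> J'" "c \<in> J' \<rightarrow> carrier R" "s \<in> carrier R" "x \<in> vecs R J"
  shows "transvection R j J' c (\<ominus> s) (transvection R j J' c s x) = x"
proof -
  have "(\<Oplus>l\<in>J'. c l \<otimes> transvection R j J' c s x l) = (\<Oplus>l\<in>J'. c l \<otimes> x l)"
    using assms unfolding transvection_def by (intro finsum_cong') (auto simp: Pi_def vecs_carrier)
  moreover have "(\<Oplus>l\<in>J'. c l \<otimes> x l) \<in> carrier R" "x j \<in> carrier R"
    using assms by (auto intro!: finsum_closed simp: vecs_carrier)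
  moreover have "b \<in> carrier R \<Longrightarrow> y \<in> carrier R \<Longrightarrow> (y \<oplus> s \<otimes> b) \<oplus> (\<ominus> s) \<otimes> b = y" for y b
    using assms(3) by algebra
  ultimately show ?thesis unfolding transvection_def by (auto simp: fun_eq_iff)
qed

lemma colcomb_transvection:
  assumes fin: "finite J" and j: "j \<notin> J" and a: "\<forall>l\<in>insert j J. \<forall>i<m. a l i \<in> carrier R"
    and c: "c \<in> J \<rightarrow> carrier R" and x: "x \<in> vecs R (insert j J)"
  shows "colcomb R a m (insert j J) (transvection R j J c (\<ominus> \<one>) x) =
    colcomb R (\<lambda>l i. if l = j then a j i else a l i \<ominus> c l \<otimes> a j i) m (insert j J) x"
proof (rule ext)
  fix i
  show "colcomb R a m (insert j J) (transvection R j J c (\<ominus> \<one>) x) i =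
    colcomb R (\<lambda>l i. if l = j then a j i else a l i \<ominus> c l \<otimes> a j i) m (insert j J) x i"
  proof (cases "i < m")
    case True
    let ?S = "\<Oplus>l\<in>J. c l \<otimes> x l" and ?P = "\<Oplus>l\<in>J. a l i \<otimes> x l"
    have xc: "\<And>l. x l \<in> carrier R" using x vecs_carrier by auto
    have ac: "\<And>l. l \<in> insert j J \<Longrightarrow> a l i \<in> carrier R" using a True by auto
    have S: "?S \<in> carrier R" and P: "?P \<in> carrier R" using c xc ac by (auto intro!: finsum_closed)
    have "(\<Oplus>l\<in>J. (a l i \<ominus> c l \<otimes> a j i) \<otimes> x l) = (\<Oplus>l\<in>J. a l i \<otimes> x l \<ominus> a j i \<otimes> (c l \<otimes> x l))"
    proof (intro finsum_cong')
      fix l assume "l \<in> J"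
      then show "(a l i \<ominus> c l \<otimes> a j i) \<otimes> x l = a l i \<otimes> x l \<ominus> a j i \<otimes> (c l \<otimes> x l)"
        using ac c xc by (simp add: Pi_def) algebra
    qed (use ac c xc in \<open>auto simp: Pi_def\<close>)
    also have "\<dots> = ?P \<ominus> (\<Oplus>l\<in>J. a j i \<otimes> (c l \<otimes> x l))"
      using ac c xc fin by (intro finsum_minus) (auto simp: Pi_def)
    also have "(\<Oplus>l\<in>J. a j i \<otimes> (c l \<otimes> x l)) = a j i \<otimes> ?S"
      using ac c xc fin by (intro finsum_rdistr[symmetric]) (auto simp: Pi_def)
    finally have rhs: "(\<Oplus>l\<in>J. (a l i \<ominus> c l \<otimes> a j i) \<otimes> x l) = ?P \<ominus> a j i \<otimes> ?S" .
    have lhs: "(\<Oplus>l\<in>J. a l i \<otimes> transvection R j J c (\<ominus> \<one>) x l) = ?P"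
      using j ac xc by (intro finsum_cong') (auto simp: transvection_def)
    have rhs': "(\<Oplus>l\<in>J. (if l = j then a j i else a l i \<ominus> c l \<otimes> a j i) \<otimes> x l) =
        (\<Oplus>l\<in>J. (a l i \<ominus> c l \<otimes> a j i) \<otimes> x l)"
      using j ac xc c by (intro finsum_cong') (auto simp: Pi_def)
    have "\<lbrakk>b \<in> carrier R; y \<in> carrier R; S \<in> carrier R; P \<in> carrier R\<rbrakk> \<Longrightarrow>
        b \<otimes> (y \<oplus> (\<ominus> \<one>) \<otimes> S) \<oplus> P = b \<otimes> y \<oplus> (P \<ominus> b \<otimes> S)" for b y S P
      by algebra
    then have "a j i \<otimes> (x j \<oplus> (\<ominus> \<one>) \<otimes> ?S) \<oplus> ?P = a j i \<otimes> x j \<oplus> (?P \<ominus> a j i \<otimes> ?S)"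
      using ac[of j] xc S P by blast
    moreover have "transvection R j J c (\<ominus> \<one>) x j = x j \<oplus> (\<ominus> \<one>) \<otimes> ?S"
      by (simp add: transvection_def)
    moreover have "transvection R j J c (\<ominus> \<one>) x \<in> vecs R (insert j J)"
      using transvection_vecs[OF _ c _ x] by simp
    then have "(\<Oplus>l\<in>insert j J. a l i \<otimes> transvection R j J c (\<ominus> \<one>) x l) =
        a j i \<otimes> transvection R j J c (\<ominus> \<one>) x j \<oplus> (\<Oplus>l\<in>J. a l i \<otimes> transvection R j J c (\<ominus> \<one>) x l)"
      using ac by (intro finsum_insert[OF fin j]) (auto simp: vecs_carrier)
    moreover have "(\<Oplus>l\<in>insert j J. (if l = j then a j i else a l i \<ominus> c l \<otimes> a j i) \<otimes> x l) =
        a j i \<otimes> x j \<oplus> (\<Oplus>l\<in>J. (if l = j then a j i else a l i \<ominus> c l \<otimes> a j i) \<otimes> x l)"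
      using finsum_insert[OF fin j, of "\<lambda>l. (if l = j then a j i else a l i \<ominus> c l \<otimes> a j i) \<otimes> x l"] ac xc c
      by (simp add: Pi_def)
    ultimately show ?thesis unfolding colcomb_def using True lhs rhs rhs' by simp
  qed (simp add: colcomb_def)
qed


context
  fixes a b :: "nat \<Rightarrow> nat \<Rightarrow> 'a" and m :: nat and J :: "nat set"
    and Q Qi :: "(nat \<Rightarrow> 'a) \<Rightarrow> nat \<Rightarrow> 'a"
  assumes Q: "linear_endo R J Q" and Qi: "linear_endo R J Qi"
    and Q_Qi: "\<And>x. x \<in> vecs R J \<Longrightarrow> Q (Qi x) = x" and Qi_Q: "\<And>x. x \<in> vecs R J \<Longrightarrow> Qi (Q x) = x"
    and colcomb_Q: "\<And>x. x \<in> vecs R J \<Longrightarrow> colcomb R a m J (Q x) = colcomb R b m J x"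
begin

lemma colker_change_basis: "x \<in> colker R b m J \<longleftrightarrow> x \<in> vecs R J \<and> Q x \<in> colker R a m J"
  using Q colcomb_Q unfolding colker_def linear_endo_def by auto

lemma fin_gen_colker_change_basis:
  assumes "fin_gen R (colker R a m J)"
  shows "fin_gen R (colker R b m J)"
proof -
  obtain G where G: "finite G" "G \<subseteq> colker R a m J" "colker R a m J \<subseteq> vspan R G"
    using assms unfolding fin_gen_def by blast
  have Gv: "G \<subseteq> vecs R J" using G(2) unfolding colker_def by auto
  have "Qi g \<in> colker R b m J" if "g \<in> G" for g
  proof -
    have "Qi g \<in> vecs R J" using Qi Gv that unfolding linear_endo_def by blast
    moreover have "Q (Qi g) = g" using Q_Qi Gv that by blast
    then have "Q (Qi g) \<in> colker R a m J" using G(2) that by auto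
    ultimately show ?thesis using colker_change_basis by blast
  qed
  then have "Qi ` G \<subseteq> colker R b m J" by blast
  moreover have "colker R b m J \<subseteq> vspan R (Qi ` G)"
  proof
    fix x assume "x \<in> colker R b m J"
    then have "x \<in> vecs R J" "Q x \<in> vspan R G" using G(3) colker_change_basis by auto
    then show "x \<in> vspan R (Qi ` G)" using vspan_linear_image[OF Qi Gv] Qi_Q by metis
  qed
  ultimately show ?thesis using G(1) unfolding fin_gen_def by blast
qed

lemma splits_kernel_change_basis:
  assumes f: "splits_kernel R b m J f"
  shows "splits_kernel R a m J (Q \<circ> f \<circ> Qi)"
  unfolding splits_kernel_def
proof (intro conjI ballI)
  have f_lin: "linear_endo R J f" using f unfolding splits_kernel_def by blast
  then show "linear_endo R J (Q \<circ> f \<circ> Qi)" using Q Qi by (intro linear_endo_comp)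
  have vecs: "\<And>h x. linear_endo R J h \<Longrightarrow> x \<in> vecs R J \<Longrightarrow> h x \<in> vecs R J"
    unfolding linear_endo_def by blast
  fix x assume x: "x \<in> vecs R J"
  have "colcomb R a m J (Q (f (Qi x))) = colcomb R b m J (f (Qi x))" using colcomb_Q vecs f_lin Qi x by blast
  also have "\<dots> = colcomb R b m J (Qi x)" using f Qi x vecs unfolding splits_kernel_def by blast
  also have "\<dots> = colcomb R a m J x" using colcomb_Q[of "Qi x"] Q_Qi x Qi vecs by metis
  finally show "colcomb R a m J ((Q \<circ> f \<circ> Qi) x) = colcomb R a m J x" by simp
next
  fix x assume x: "x \<in> colker R a m J"
  then have "x \<in> vecs R J" unfolding colker_def by blast
  then have "Qi x \<in> vecs R J" "Q (Qi x) \<in> colker R a m J" using Qi Q_Qi x unfolding linear_endo_def by auto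
  then have "Qi x \<in> colker R b m J" using colker_change_basis by blast
  then show "(Q \<circ> f \<circ> Qi) x = vzero R" using f linear_endo_vzero[OF Q] unfolding splits_kernel_def by simp
qed

end

lemma colcomb_zero_coord:
  assumes "finite J" "j \<notin> J" "\<forall>l\<in>insert j J. \<forall>i<m. a l i \<in> carrier R"
    and "x \<in> vecs R (insert j J)" "x j = \<zero>"
  shows "colcomb R a m (insert j J) x = colcomb R a m J x"
proof -
  have "colcomb R a m J x \<in> vecs R {..<m}" using assms(3,4) by (intro colcomb_vecs) auto
  then show ?thesis
    using colcomb_insert[OF assms(1-4)] assms(3,5) by (auto simp: vadd_def fun_eq_iff vecs_carrier)
qed

lemma colker_drop_column:
  assumes fin: "finite J" and j: "j \<notin> J" and a: "\<forall>l\<in>insert j J. \<forall>i<m. a l i \<in> carrier R"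
    and vanish: "\<forall>x\<in>colker R a m (insert j J). x j = \<zero>"
  shows "colker R a m J = colker R a m (insert j J)"
proof (intro equalityI subsetI)
  fix x assume x: "x \<in> colker R a m J"
  then have "x \<in> vecs R (insert j J)" "x j = \<zero>" using j vecs_mono unfolding colker_def vecs_def by auto
  then show "x \<in> colker R a m (insert j J)" using x colcomb_zero_coord[OF fin j a] unfolding colker_def by auto
next
  fix x assume x: "x \<in> colker R a m (insert j J)"
  then have "x j = \<zero>" using vanish by blast
  then have "x \<in> vecs R J" using x j vecs_upd_zero[of x "insert j J" j] unfolding colker_def
    by (auto simp: fun_upd_idem)
  then show "x \<in> colker R a m J" using x \<open>x j = \<zero>\<close> colcomb_zero_coord[OF fin j a] unfolding colker_def by auto
qed

lemma splits_kernel_extend: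
  assumes fin: "finite J" and j: "j \<notin> J" and a: "\<forall>l\<in>insert j J. \<forall>i<m. a l i \<in> carrier R"
    and ker: "colker R a m J = colker R a m (insert j J)" and f: "splits_kernel R a m J f"
  shows "splits_kernel R a m (insert j J) (\<lambda>x. (f (x(j := \<zero>)))(j := x j))"
    (is "splits_kernel R a m ?J ?g")
proof -
  have f_lin: "linear_endo R J f" using f unfolding splits_kernel_def by blast
  have upd: "x(j := \<zero>) \<in> vecs R J" if "x \<in> vecs R ?J" for x
    using vecs_upd_zero[OF that, of j] j by (simp add: Diff_insert_absorb)
  have fv: "f y \<in> vecs R J" if "y \<in> vecs R J" for y using f_lin that unfolding linear_endo_def by blast
  have aJ: "\<forall>l\<in>J. \<forall>i<m. a l i \<in> carrier R" using a by blast
  have "linear_endo R ?J ?g"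
    unfolding linear_endo_def
  proof (intro conjI ballI)
    fix x assume x: "x \<in> vecs R ?J"
    show "?g x \<in> vecs R ?J" using fv[OF upd[OF x]] vecs_carrier[OF x] unfolding vecs_def by auto
  next
    fix x y assume x: "x \<in> vecs R ?J" and y: "y \<in> vecs R ?J"
    have "(vadd R x y)(j := \<zero>) = vadd R (x(j := \<zero>)) (y(j := \<zero>))" by (auto simp: vadd_def fun_eq_iff)
    then have "f ((vadd R x y)(j := \<zero>)) = vadd R (f (x(j := \<zero>))) (f (y(j := \<zero>)))"
      using f_lin upd[OF x] upd[OF y] unfolding linear_endo_def by simp
    then show "?g (vadd R x y) = vadd R (?g x) (?g y)" by (auto simp: vadd_def fun_eq_iff)
  next
    fix k x assume k: "k \<in> carrier R" and x: "x \<in> vecs R ?J"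
    have "(vsmult R k x)(j := \<zero>) = vsmult R k (x(j := \<zero>))" using k by (auto simp: vsmult_def fun_eq_iff)
    then have "f ((vsmult R k x)(j := \<zero>)) = vsmult R k (f (x(j := \<zero>)))"
      using f_lin upd[OF x] k unfolding linear_endo_def by simp
    then show "?g (vsmult R k x) = vsmult R k (?g x)" by (auto simp: vsmult_def fun_eq_iff)
  qed
  moreover have "colcomb R a m ?J (?g x) = colcomb R a m ?J x" if x: "x \<in> vecs R ?J" for x
  proof -
    have gx: "?g x \<in> vecs R ?J" using fv[OF upd[OF x]] vecs_carrier[OF x] unfolding vecs_def by auto
    have "colcomb R a m J (?g x) = colcomb R a m J (f (x(j := \<zero>)))"
      using aJ j fv[OF upd[OF x]] by (intro colcomb_cong) (auto simp: vecs_carrier)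
    also have "\<dots> = colcomb R a m J (x(j := \<zero>))" using f upd[OF x] unfolding splits_kernel_def by blast
    also have "\<dots> = colcomb R a m J x" using aJ j x by (intro colcomb_cong) (auto simp: vecs_carrier)
    finally have J_eq: "colcomb R a m J (?g x) = colcomb R a m J x" .
    have insert_eq: "colcomb R a m ?J z = colcomb R a m ?J x"
      if "z \<in> vecs R ?J" "z j = x j" "colcomb R a m J z = colcomb R a m J x" for z
      using that colcomb_insert[OF fin j a that(1)] colcomb_insert[OF fin j a x] by (simp cong: if_cong)
    show ?thesis by (rule insert_eq[OF gx _ J_eq]) simp
  qed
  moreover have "?g x = vzero R" if "x \<in> colker R a m ?J" for x
  proof -
    have "x \<in> colker R a m J" using that ker by simp
    then have "x \<in> vecs R J" "f x = vzero R" using f unfolding splits_kernel_def colker_def by auto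
    moreover have "x j = \<zero>" using \<open>x \<in> vecs R J\<close> j unfolding vecs_def by auto
    ultimately show ?thesis by (simp add: fun_upd_idem vzero_def fun_eq_iff)
  qed
  ultimately show ?thesis unfolding splits_kernel_def by blast
qed

lemma clear_pivot_row:
  assumes fin: "finite J" and j: "j \<notin> J" and a: "\<forall>l\<in>insert j J. \<forall>i'<m. a l i' \<in> carrier R"
    and c: "\<forall>l\<in>J. c l \<in> carrier R \<and> a l i = a j i \<otimes> c l" and i: "i < m"
  obtains Q Qi b where "linear_endo R (insert j J) Q" "linear_endo R (insert j J) Qi"
    "\<And>x. x \<in> vecs R (insert j J) \<Longrightarrow> Q (Qi x) = x"
    "\<And>x. x \<in> vecs R (insert j J) \<Longrightarrow> Qi (Q x) = x"
    "\<And>x. x \<in> vecs R (insert j J) \<Longrightarrow>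
      colcomb R a m (insert j J) (Q x) = colcomb R b m (insert j J) x"
    "\<forall>l\<in>insert j J. \<forall>i'<m. b l i' \<in> carrier R" "\<forall>l\<in>J. b l i = \<zero>" "\<forall>i'. b j i' = a j i'"
proof -
  have cPi: "c \<in> J \<rightarrow> carrier R" using c by blast
  define b where "b = (\<lambda>l i'. if l = j then a j i' else a l i' \<ominus> c l \<otimes> a j i')"
  have b: "\<forall>l\<in>insert j J. \<forall>i'<m. b l i' \<in> carrier R" using a c unfolding b_def by auto
  have row: "\<forall>l\<in>J. b l i = \<zero>"
  proof
    fix l assume l: "l \<in> J"
    then have "a l i = a j i \<otimes> c l" "c l \<in> carrier R" "a j i \<in> carrier R" using c a i by auto
    moreover have "l \<noteq> j" using l j by blast
    ultimately show "b l i = \<zero>" unfolding b_def by (simp add: m_comm[of "c l"] a_minus_def r_neg)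
  qed
  have col: "\<forall>i'. b j i' = a j i'" unfolding b_def by simp
  have eq: "colcomb R a m (insert j J) (transvection R j J c (\<ominus> \<one>) x) = colcomb R b m (insert j J) x"
    if "x \<in> vecs R (insert j J)" for x
    unfolding b_def using colcomb_transvection[OF fin j a cPi that] .
  have inv: "transvection R j J c (\<ominus> \<one>) (transvection R j J c \<one> x) = x"
    "transvection R j J c \<one> (transvection R j J c (\<ominus> \<one>) x) = x" if "x \<in> vecs R (insert j J)" for x
    using transvection_inverse[OF j cPi, of \<one> x] transvection_inverse[OF j cPi, of "\<ominus> \<one>" x] that by auto
  have lin: "linear_endo R (insert j J) (transvection R j J c s)" if "s \<in> carrier R" for s
    using linear_endo_transvection[OF fin _ cPi that, of j] by simp
  show ?thesis
    by (rule that[OF lin lin inv(1) inv(2) eq b row col]) simp_all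
qed


lemma colcomb_cleared_row:
  assumes fin: "finite J" and j: "j \<notin> J" and b: "\<forall>l\<in>insert j J. \<forall>i<m. b l i \<in> carrier R"
    and i: "i < m" and row: "\<forall>l\<in>J. b l i = \<zero>" and y: "y \<in> vecs R (insert j J)"
  shows "colcomb R b m (insert j J) y i = b j i \<otimes> y j"
proof -
  have "(\<Oplus>l\<in>J. b l i \<otimes> y l) = (\<Oplus>l\<in>J. \<zero>)" using row y by (intro finsum_cong') (auto simp: vecs_carrier)
  then have "colcomb R b m J y i = \<zero>" using i by (simp add: colcomb_def)
  then show ?thesis using colcomb_insert[OF fin j b y] i b vecs_carrier[OF y] by (auto simp: vadd_def vzero_def)
qed

text \<open>Every \<open>y \<in> ann p\<close> gives the kernel vector \<open>y e\<^sub>j\<close> because \<open>p\<close> divides column \<open>j\<close>;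
  conversely row \<open>i\<close> of a kernel vector \<open>x\<close> reads \<open>p x\<^sub>j = 0\<close>.\<close>

lemma ann_pivot_eq_genideal:
  assumes fin: "finite J" and j: "j \<notin> J" and b: "\<forall>l\<in>insert j J. \<forall>i<m. b l i \<in> carrier R"
    and i: "i < m" and row: "\<forall>l\<in>J. b l i = \<zero>" and col: "\<forall>i'<m. b j i' \<in> PIdl (b j i)"
    and G: "G \<subseteq> colker R b m (insert j J)" "colker R b m (insert j J) \<subseteq> vspan R G"
  shows "ann R (b j i) = Idl ((\<lambda>v. v j) ` G)"
proof
  let ?J = "insert j J" and ?p = "b j i" and ?H = "(\<lambda>v. v j) ` G"
  have pc: "?p \<in> carrier R" using b i by blast
  have Gv: "G \<subseteq> vecs R ?J" using G(1) unfolding colker_def by auto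
  have "?H \<subseteq> ann R ?p"
  proof
    fix y assume "y \<in> ?H"
    then obtain g where g: "g \<in> G" "y = g j" by blast
    then have "?p \<otimes> g j = \<zero>"
      using colcomb_cleared_row[OF fin j b i row, of g] G(1) Gv i unfolding colker_def vzero_def by auto
    then show "y \<in> ann R ?p" using g Gv vecs_carrier by (auto simp: ann_def)
  qed
  then show "Idl ?H \<subseteq> ann R ?p" by (rule genideal_minimal[OF ideal_ann[OF pc]])
  show "ann R ?p \<subseteq> Idl ?H"
  proof
    fix y assume "y \<in> ann R ?p"
    then have y: "y \<in> carrier R" "?p \<otimes> y = \<zero>" by (auto simp: ann_def)
    define e where "e = (\<lambda>l. if l = j then y else \<zero>)"
    have e: "e \<in> vecs R ?J" unfolding e_def vecs_def using y by auto
    have "b j i' \<otimes> y = \<zero>" if i': "i' < m" for i'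
    proof -
      obtain v where "v \<in> carrier R" "b j i' = ?p \<otimes> v"
        using col[rule_format, OF i'] mem_PIdl_iff[OF pc] by blast
      then show ?thesis using y pc by (simp add: m_ac)
    qed
    then have "colcomb R b m ?J e = vzero R"
      using b j unfolding e_def by (intro colcomb_vanishing) auto
    then have "e \<in> vspan R G" using G(2) e unfolding colker_def by auto
    then show "y \<in> Idl ?H" using vspan_coord_genideal[OF Gv, of e j] unfolding e_def by simp
  qed
qed

end

context chain_ring
begin

lemma exists_pivot:
  fixes a :: "nat \<Rightarrow> nat \<Rightarrow> 'a" and m :: nat
  assumes "finite J" "\<forall>l\<in>J. \<forall>i<m. a l i \<in> carrier R" "\<not> (\<forall>l\<in>J. \<forall>i<m. a l i = \<zero>)"
  shows "\<exists>j\<in>J. \<exists>i<m. a j i \<noteq> \<zero> \<and> (\<forall>l\<in>J. \<forall>i'<m. a l i' \<in> PIdl (a j i))"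
proof -
  define E where "E = (\<lambda>p. a (fst p) (snd p)) ` (J \<times> {..<m})"
  have mem_E: "a l i \<in> E" if "l \<in> J" "i < m" for l i
    unfolding E_def using that by (intro rev_image_eqI[of "(l, i)"]) auto
  have "finite E" unfolding E_def using assms(1) by simp
  moreover have "E \<subseteq> carrier R" unfolding E_def using assms(2) by auto
  ultimately have "\<exists>g\<in>insert \<zero> E. E \<subseteq> PIdl g" by (rule finite_common_divisor)
  then obtain g where g: "g \<in> insert \<zero> E" "E \<subseteq> PIdl g" ..
  have entries: "a l i \<in> PIdl g" if "l \<in> J" "i < m" for l i using g(2) mem_E[OF that] by (rule subsetD)
  have "g \<noteq> \<zero>"
  proof
    assume "g = \<zero>"
    then have "a l i = \<zero>" if "l \<in> J" "i < m" for l i using entries[OF that] PIdl_zero by simp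
    then show False using assms(3) by blast
  qed
  then have "g \<in> E" using g(1) by simp
  then obtain p where "p \<in> J \<times> {..<m}" "g = a (fst p) (snd p)" unfolding E_def by (rule imageE)
  then show ?thesis using entries \<open>g \<noteq> \<zero>\<close> by (intro bexI[of _ "fst p"] exI[of _ "snd p"]) auto
qed

end

context fg_ann_trivial_chain_ring
begin

lemma pivot_coord_vanishes:
  assumes fin: "finite J" and j: "j \<notin> J" and b: "\<forall>l\<in>insert j J. \<forall>i<m. b l i \<in> carrier R"
    and i: "i < m" and p: "b j i \<noteq> \<zero>" and row: "\<forall>l\<in>J. b l i = \<zero>"
    and col: "\<forall>i'<m. b j i' \<in> PIdl (b j i)"
    and fg: "fin_gen R (colker R b m (insert j J))" and x: "x \<in> colker R b m (insert j J)"
  shows "x j = \<zero>"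
proof -
  obtain G where G: "finite G" "G \<subseteq> colker R b m (insert j J)" "colker R b m (insert j J) \<subseteq> vspan R G"
    using fg unfolding fin_gen_def by blast
  have "(\<lambda>v. v j) ` G \<subseteq> carrier R" using G(2) vecs_carrier unfolding colker_def by auto
  then have "ann R (b j i) = {\<zero>}"
    using fg_ann_trivial[OF _ p] ann_pivot_eq_genideal[OF fin j b i row col G(2,3)] b i G(1) by blast
  moreover have "x j \<in> ann R (b j i)"
    using colcomb_cleared_row[OF fin j b i row, of x] x i vecs_carrier
    unfolding colker_def vzero_def ann_def by (auto simp: fun_eq_iff)
  ultimately show ?thesis by blast
qed

lemma kernel_splits:
  assumes "finite J" "\<forall>l\<in>J. \<forall>i<m. a l i \<in> carrier R" "fin_gen R (colker R a m J)"
  shows "\<exists>f. splits_kernel R a m J f"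
  using assms
proof (induction "card J" arbitrary: J a rule: less_induct)
  case less
  note fin = less.prems(1) and a = less.prems(2) and fg = less.prems(3)
  show ?case
  proof (cases "\<forall>l\<in>J. \<forall>i<m. a l i = \<zero>")
    case True
    then have "colcomb R a m J x = vzero R" if "x \<in> vecs R J" for x
      using that by (intro colcomb_vanishing) (auto simp: vecs_carrier)
    then have "splits_kernel R a m J (\<lambda>x. vzero R)"
      unfolding splits_kernel_def colker_def using linear_endo_vzero_map by auto
    then show ?thesis by blast
  next
    case False
    obtain j i where j: "j \<in> J" and i: "i < m" and p: "a j i \<noteq> \<zero>"
      and divides: "\<forall>l\<in>J. \<forall>i'<m. a l i' \<in> PIdl (a j i)"
      using exists_pivot[OF fin a False] by blast
    define J' where "J' = J - {j}"
    have J: "J = insert j J'" and j': "j \<notin> J'" and fin': "finite J'" and card': "card J' < card J"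
      using fin j card_Diff1_less[OF fin j] unfolding J'_def by auto
    have pc: "a j i \<in> carrier R" using a j i by blast
    have "\<forall>l\<in>J'. \<exists>v. v \<in> carrier R \<and> a l i = a j i \<otimes> v"
    proof
      fix l assume "l \<in> J'"
      then have "a l i \<in> PIdl (a j i)" using divides i unfolding J'_def by blast
      then show "\<exists>v. v \<in> carrier R \<and> a l i = a j i \<otimes> v" unfolding mem_PIdl_iff[OF pc] by blast
    qed
    then have "\<exists>c. \<forall>l\<in>J'. c l \<in> carrier R \<and> a l i = a j i \<otimes> c l" by (rule bchoice)
    then obtain c where c: "\<forall>l\<in>J'. c l \<in> carrier R \<and> a l i = a j i \<otimes> c l" by blast
    obtain Q Qi b where lin: "linear_endo R (insert j J') Q" "linear_endo R (insert j J') Qi"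
      and inv: "\<And>x. x \<in> vecs R (insert j J') \<Longrightarrow> Q (Qi x) = x"
        "\<And>x. x \<in> vecs R (insert j J') \<Longrightarrow> Qi (Q x) = x"
      and colcomb_Q: "\<And>x. x \<in> vecs R (insert j J') \<Longrightarrow>
        colcomb R a m (insert j J') (Q x) = colcomb R b m (insert j J') x"
      and b: "\<forall>l\<in>insert j J'. \<forall>i'<m. b l i' \<in> carrier R" and row: "\<forall>l\<in>J'. b l i = \<zero>"
      and col_j: "\<forall>i'. b j i' = a j i'"
      by (rule clear_pivot_row[OF fin' j' a[unfolded J] c i], rule that) assumption+
    have fg_b: "fin_gen R (colker R b m (insert j J'))"
      by (rule fin_gen_colker_change_basis[OF lin inv colcomb_Q fg[unfolded J]])
    have "\<forall>i'<m. b j i' \<in> PIdl (b j i)" using divides j col_j by simp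
    then have "\<forall>x\<in>colker R b m (insert j J'). x j = \<zero>"
      using pivot_coord_vanishes[OF fin' j' b i _ row _ fg_b] p col_j by simp
    then have ker: "colker R b m J' = colker R b m (insert j J')"
      by (rule colker_drop_column[OF fin' j' b])
    have "\<forall>l\<in>J'. \<forall>i'<m. b l i' \<in> carrier R" "fin_gen R (colker R b m J')"
      using b fg_b ker by auto
    then obtain f where "splits_kernel R b m J' f" using less.hyps[OF card' fin'] by blast
    then have "splits_kernel R b m (insert j J') (\<lambda>x. (f (x(j := \<zero>)))(j := x j))"
      by (rule splits_kernel_extend[OF fin' j' b ker])
    then show ?thesis unfolding J using splits_kernel_change_basis[OF lin inv colcomb_Q] by blast
  qed
qed

end

section \<open>Matrices\<close>

definition matmul ::
    "('a, 'm) ring_scheme \<Rightarrow> (nat \<Rightarrow> nat \<Rightarrow> 'a) \<Rightarrow> (nat \<Rightarrow> nat \<Rightarrow> 'a) \<Rightarrow> nat \<Rightarrow> nat \<Rightarrow> nat \<Rightarrow> 'a" where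
  "matmul R A B n = (\<lambda>r c. \<Oplus>\<^bsub>R\<^esub> j \<in> {..<n}. A r j \<otimes>\<^bsub>R\<^esub> B j c)"

definition mat_over :: "('a, 'm) ring_scheme \<Rightarrow> (nat \<Rightarrow> nat \<Rightarrow> 'a) \<Rightarrow> nat \<Rightarrow> nat \<Rightarrow> bool" where
  "mat_over R A m n \<longleftrightarrow> (\<forall>r<m. \<forall>c<n. A r c \<in> carrier R)"

definition splitting_matrix :: "('a, 'm) ring_scheme \<Rightarrow> (nat \<Rightarrow> nat \<Rightarrow> 'a) \<Rightarrow> (nat \<Rightarrow> nat \<Rightarrow> 'a) \<Rightarrow>
    nat \<Rightarrow> nat \<Rightarrow> nat \<Rightarrow> 'a \<Rightarrow> (nat \<Rightarrow> nat \<Rightarrow> 'a) \<Rightarrow> bool" where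
  "splitting_matrix R A1 A2 k0 k1 k2 \<rho> T \<longleftrightarrow> mat_over R T k1 k1 \<and>
     (\<forall>i<k0. \<forall>c<k1. matmul R A1 T k1 i c = \<rho> \<otimes>\<^bsub>R\<^esub> A1 i c) \<and> (\<forall>r<k1. \<forall>l<k2. matmul R T A2 k1 r l = \<zero>\<^bsub>R\<^esub>)"

context cring
begin

lemma fvec_carrier: "x \<in> fvec R k \<Longrightarrow> x c \<in> carrier R"
  unfolding fvec_def by (cases "c < k") auto

lemma fvec_diff: "x \<in> fvec R k \<Longrightarrow> y \<in> fvec R k \<Longrightarrow> (\<lambda>c. x c \<ominus> y c) \<in> fvec R k"
  unfolding fvec_def by (auto simp: a_minus_def)

lemma finsum_delta:
  assumes "finite A" "l \<in> A" "f \<in> A \<rightarrow> carrier R"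
  shows "(\<Oplus>d\<in>A. f d \<otimes> (if d = l then \<one> else \<zero>)) = f l"
proof -
  have "(\<Oplus>d\<in>A. f d \<otimes> (if d = l then \<one> else \<zero>)) = (\<Oplus>d\<in>A. if l = d then f d else \<zero>)"
    using assms by (intro finsum_cong') (auto simp: Pi_def)
  also have "\<dots> = f l" using finsum_singleton[OF assms(2,1,3)] .
  finally show ?thesis .
qed

lemma finsum_swap:
  assumes "finite A" "finite B" "\<forall>a\<in>A. \<forall>b\<in>B. f a b \<in> carrier R"
  shows "(\<Oplus>a\<in>A. \<Oplus>b\<in>B. f a b) = (\<Oplus>b\<in>B. \<Oplus>a\<in>A. f a b)"
  using assms
proof (induction A rule: finite_induct)
  case empty then show ?case by (simp add: finsum_zero)
next
  case (insert a A)
  have fa: "(\<lambda>b. f a b) \<in> B \<rightarrow> carrier R" using insert by auto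
  have fA: "(\<lambda>b. \<Oplus>a\<in>A. f a b) \<in> B \<rightarrow> carrier R" using insert by (auto intro!: finsum_closed)
  have "(\<Oplus>a\<in>insert a A. \<Oplus>b\<in>B. f a b) = (\<Oplus>b\<in>B. f a b) \<oplus> (\<Oplus>a\<in>A. \<Oplus>b\<in>B. f a b)"
    using insert by (intro finsum_insert) (auto intro!: finsum_closed)
  also have "\<dots> = (\<Oplus>b\<in>B. f a b) \<oplus> (\<Oplus>b\<in>B. \<Oplus>a\<in>A. f a b)" using insert by simp
  also have "\<dots> = (\<Oplus>b\<in>B. f a b \<oplus> (\<Oplus>a\<in>A. f a b))" using finsum_addf[OF fa fA] by simp
  also have "\<dots> = (\<Oplus>b\<in>B. \<Oplus>a\<in>insert a A. f a b)"
    using insert by (intro finsum_cong') (auto intro!: finsum_closed)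
  finally show ?case .
qed

lemma matvec_matvec:
  assumes A: "mat_over R A m n" and B: "mat_over R B n k" and x: "x \<in> fvec R k"
  shows "matvec R A m n (matvec R B n k x) = matvec R (matmul R A B n) m k x"
proof (rule ext)
  fix r
  show "matvec R A m n (matvec R B n k x) r = matvec R (matmul R A B n) m k x r"
  proof (cases "r < m")
    case False then show ?thesis unfolding matvec_def by simp
  next
    case True
    have xc: "\<And>c. c < k \<Longrightarrow> x c \<in> carrier R" using x unfolding fvec_def by auto
    have Ac: "\<And>j. j < n \<Longrightarrow> A r j \<in> carrier R" using A True unfolding mat_over_def by auto
    have Bc: "\<And>j c. j < n \<Longrightarrow> c < k \<Longrightarrow> B j c \<in> carrier R" using B unfolding mat_over_def by auto
    have "(\<Oplus>j\<in>{..<n}. A r j \<otimes> matvec R B n k x j) = (\<Oplus>j\<in>{..<n}. \<Oplus>c\<in>{..<k}. A r j \<otimes> (B j c \<otimes> x c))"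
    proof (rule finsum_cong')
      fix j assume j: "j \<in> {..<n}"
      then have "A r j \<otimes> matvec R B n k x j = A r j \<otimes> (\<Oplus>c\<in>{..<k}. B j c \<otimes> x c)" unfolding matvec_def by simp
      also have "\<dots> = (\<Oplus>c\<in>{..<k}. A r j \<otimes> (B j c \<otimes> x c))"
        using j Ac Bc xc by (intro finsum_rdistr) auto
      finally show "A r j \<otimes> matvec R B n k x j = (\<Oplus>c\<in>{..<k}. A r j \<otimes> (B j c \<otimes> x c))" .
    qed (use Ac Bc xc in \<open>auto intro!: finsum_closed\<close>)
    also have "\<dots> = (\<Oplus>c\<in>{..<k}. \<Oplus>j\<in>{..<n}. A r j \<otimes> (B j c \<otimes> x c))"
      using Ac Bc xc by (intro finsum_swap) auto
    also have "\<dots> = (\<Oplus>c\<in>{..<k}. matmul R A B n r c \<otimes> x c)"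
    proof (rule finsum_cong')
      fix c assume c: "c \<in> {..<k}"
      have "(\<Oplus>j\<in>{..<n}. A r j \<otimes> (B j c \<otimes> x c)) = (\<Oplus>j\<in>{..<n}. A r j \<otimes> B j c \<otimes> x c)"
        using c Ac Bc xc by (intro finsum_cong') (auto simp: m_assoc)
      also have "\<dots> = (\<Oplus>j\<in>{..<n}. A r j \<otimes> B j c) \<otimes> x c"
        using c Ac Bc xc by (intro finsum_ldistr[symmetric]) auto
      finally show "(\<Oplus>j\<in>{..<n}. A r j \<otimes> (B j c \<otimes> x c)) = matmul R A B n r c \<otimes> x c"
        unfolding matmul_def by simp
    qed (use Ac Bc xc in \<open>auto intro!: finsum_closed simp: matmul_def\<close>)
    finally show ?thesis unfolding matvec_def using True by simp
  qed
qed

lemma matvec_fvec: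
  assumes A: "mat_over R A m k" and x: "\<forall>c<k. x c \<in> carrier R"
  shows "matvec R A m k x \<in> fvec R m"
  using A x unfolding mat_over_def fvec_def matvec_def by (auto intro!: finsum_closed)

lemma matvec_smult:
  assumes A: "mat_over R A m k" and x: "x \<in> fvec R k" and u: "u \<in> carrier R"
  shows "matvec R A m k (\<lambda>c. u \<otimes> x c) = (\<lambda>r. u \<otimes> matvec R A m k x r)"
proof (rule ext)
  fix r
  have xc: "\<And>c. c < k \<Longrightarrow> x c \<in> carrier R" using x unfolding fvec_def by auto
  show "matvec R A m k (\<lambda>c. u \<otimes> x c) r = u \<otimes> matvec R A m k x r"
  proof (cases "r < m")
    case True
    have Ac: "\<And>c. c < k \<Longrightarrow> A r c \<in> carrier R" using A True unfolding mat_over_def by auto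
    have "(\<Oplus>c\<in>{..<k}. A r c \<otimes> (u \<otimes> x c)) = (\<Oplus>c\<in>{..<k}. u \<otimes> (A r c \<otimes> x c))"
      using Ac xc u by (intro finsum_cong') (auto simp: m_lcomm)
    also have "\<dots> = u \<otimes> (\<Oplus>c\<in>{..<k}. A r c \<otimes> x c)"
      using Ac xc u by (intro finsum_rdistr[symmetric]) auto
    finally show ?thesis unfolding matvec_def using True by simp
  qed (simp add: matvec_def u)
qed

lemma matvec_cong:
  assumes "\<And>r c. r < m \<Longrightarrow> c < k \<Longrightarrow> A r c = B r c" "mat_over R B m k" "\<forall>c<k. x c \<in> carrier R"
  shows "matvec R A m k x = matvec R B m k x"
  unfolding matvec_def using assms unfolding mat_over_def by (auto intro!: finsum_cong' simp: fun_eq_iff)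

lemma matvec_carrier: "mat_over R A m k \<Longrightarrow> x \<in> fvec R k \<Longrightarrow> matvec R A m k x r \<in> carrier R"
  using matvec_fvec[of A m k x] fvec_carrier[of _ k] fvec_carrier[of _ m] by blast

lemma matvec_diff:
  assumes A: "mat_over R A m k" and x: "x \<in> fvec R k" and y: "y \<in> fvec R k"
  shows "matvec R A m k (\<lambda>c. x c \<ominus> y c) = (\<lambda>r. matvec R A m k x r \<ominus> matvec R A m k y r)"
proof (rule ext)
  fix r
  show "matvec R A m k (\<lambda>c. x c \<ominus> y c) r = matvec R A m k x r \<ominus> matvec R A m k y r"
  proof (cases "r < m")
    case True
    have Ac: "\<And>c. c < k \<Longrightarrow> A r c \<in> carrier R" using A True unfolding mat_over_def by auto
    have "(\<Oplus>c\<in>{..<k}. A r c \<otimes> (x c \<ominus> y c)) = (\<Oplus>c\<in>{..<k}. A r c \<otimes> x c \<ominus> A r c \<otimes> y c)"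
      using Ac x y by (intro finsum_cong') (auto simp: fvec_carrier r_minus a_minus_def r_distr)
    also have "\<dots> = (\<Oplus>c\<in>{..<k}. A r c \<otimes> x c) \<ominus> (\<Oplus>c\<in>{..<k}. A r c \<otimes> y c)"
      using Ac x y by (intro finsum_minus) (auto simp: fvec_carrier)
    finally show ?thesis unfolding matvec_def using True by simp
  qed (simp add: matvec_def a_minus_def)
qed

lemma matmul_add_right:
  assumes "\<forall>j<n. B i j \<in> carrier R" "\<forall>j<n. T j c \<in> carrier R" "\<forall>j<n. T' j c \<in> carrier R"
  shows "matmul R B (\<lambda>r c. T r c \<oplus> T' r c) n i c = matmul R B T n i c \<oplus> matmul R B T' n i c"
proof -
  have "(\<Oplus>j\<in>{..<n}. B i j \<otimes> (T j c \<oplus> T' j c)) = (\<Oplus>j\<in>{..<n}. B i j \<otimes> T j c \<oplus> B i j \<otimes> T' j c)"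
    using assms by (intro finsum_cong') (auto simp: r_distr)
  also have "\<dots> = (\<Oplus>j\<in>{..<n}. B i j \<otimes> T j c) \<oplus> (\<Oplus>j\<in>{..<n}. B i j \<otimes> T' j c)"
    using assms by (intro finsum_addf) auto
  finally show ?thesis unfolding matmul_def by simp
qed

lemma matmul_add_left:
  assumes "\<forall>j<n. B j l \<in> carrier R" "\<forall>j<n. T r j \<in> carrier R" "\<forall>j<n. T' r j \<in> carrier R"
  shows "matmul R (\<lambda>r c. T r c \<oplus> T' r c) B n r l = matmul R T B n r l \<oplus> matmul R T' B n r l"
proof -
  have "(\<Oplus>j\<in>{..<n}. (T r j \<oplus> T' r j) \<otimes> B j l) = (\<Oplus>j\<in>{..<n}. T r j \<otimes> B j l \<oplus> T' r j \<otimes> B j l)"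
    using assms by (intro finsum_cong') (auto simp: l_distr)
  also have "\<dots> = (\<Oplus>j\<in>{..<n}. T r j \<otimes> B j l) \<oplus> (\<Oplus>j\<in>{..<n}. T' r j \<otimes> B j l)"
    using assms by (intro finsum_addf) auto
  finally show ?thesis unfolding matmul_def by simp
qed

lemma matmul_scale_right:
  assumes "\<forall>j<n. B i j \<in> carrier R" "\<forall>j<n. T j c \<in> carrier R" "x \<in> carrier R"
  shows "matmul R B (\<lambda>r c. x \<otimes> T r c) n i c = x \<otimes> matmul R B T n i c"
proof -
  have "(\<Oplus>j\<in>{..<n}. B i j \<otimes> (x \<otimes> T j c)) = (\<Oplus>j\<in>{..<n}. x \<otimes> (B i j \<otimes> T j c))"
    using assms by (intro finsum_cong') (auto simp: m_lcomm)
  also have "\<dots> = x \<otimes> (\<Oplus>j\<in>{..<n}. B i j \<otimes> T j c)"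
    using assms by (intro finsum_rdistr[symmetric]) auto
  finally show ?thesis unfolding matmul_def by simp
qed

lemma matmul_scale_left:
  assumes "\<forall>j<n. B j l \<in> carrier R" "\<forall>j<n. T r j \<in> carrier R" "x \<in> carrier R"
  shows "matmul R (\<lambda>r c. x \<otimes> T r c) B n r l = x \<otimes> matmul R T B n r l"
proof -
  have "(\<Oplus>j\<in>{..<n}. x \<otimes> T r j \<otimes> B j l) = (\<Oplus>j\<in>{..<n}. x \<otimes> (T r j \<otimes> B j l))"
    using assms by (intro finsum_cong') (auto simp: m_assoc)
  also have "\<dots> = x \<otimes> (\<Oplus>j\<in>{..<n}. T r j \<otimes> B j l)"
    using assms by (intro finsum_rdistr[symmetric]) auto
  finally show ?thesis unfolding matmul_def by simp
qed

end

section \<open>Localization at a maximal ideal\<close>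

locale max_localization = cring R for R (structure) +
  fixes M assumes maximal: "maximalideal M R"
begin

abbreviation "S \<equiv> carrier R - M"
abbreviation "RM \<equiv> localization R M"
definition to_loc :: "'a \<Rightarrow> ('a \<times> 'a) set" where "to_loc a = loc_class R M a \<one>"

lemma one_S: "\<one> \<in> S"
proof -
  interpret maximalideal M R by (rule maximal)
  have "\<one> \<notin> M" using one_imp_carrier I_notcarr by auto
  then show ?thesis by simp
qed

lemma mult_S: "s \<in> S \<Longrightarrow> t \<in> S \<Longrightarrow> s \<otimes> t \<in> S"
proof -
  assume s: "s \<in> S" and t: "t \<in> S"
  interpret primeideal M R using maximalideal_prime[OF maximal] .
  show ?thesis using s t I_prime[of s t] by auto
qed

lemma loc_rel_iff:
  "((a, s), (b, t)) \<in> loc_rel R M \<longleftrightarrow> a \<in> carrier R \<and> s \<in> S \<and> b \<in> carrier R \<and> t \<in> S \<and>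
     (\<exists>u\<in>S. u \<otimes> a \<otimes> t = u \<otimes> b \<otimes> s)"
  unfolding loc_rel_def by auto

lemma loc_rel_equiv: "equiv (carrier R \<times> S) (loc_rel R M)"
proof (rule equivI)
  show "refl_on (carrier R \<times> S) (loc_rel R M)"
    unfolding refl_on_def using one_S by (auto simp: loc_rel_iff intro!: bexI[of _ \<one>])
  show "sym (loc_rel R M)"
    unfolding sym_def by (auto simp: loc_rel_iff) (metis DiffI)
  show "trans (loc_rel R M)"
  proof (rule transI)
    fix x y z assume xy: "(x, y) \<in> loc_rel R M" and yz: "(y, z) \<in> loc_rel R M"
    obtain a s where x: "x = (a, s)" by fastforce
    obtain b t where y: "y = (b, t)" by fastforce
    obtain c r where z: "z = (c, r)" by fastforce
    from xy yz obtain u u' where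
      c: "a \<in> carrier R" "s \<in> S" "b \<in> carrier R" "t \<in> S" "c \<in> carrier R" "r \<in> S" "u \<in> S" "u' \<in> S"
      and e1: "u \<otimes> a \<otimes> t = u \<otimes> b \<otimes> s" and e2: "u' \<otimes> b \<otimes> r = u' \<otimes> c \<otimes> t"
      unfolding x y z loc_rel_iff by auto
    have w: "u \<otimes> u' \<otimes> t \<in> S" using c mult_S by auto
    have cc: "a \<in> carrier R" "s \<in> carrier R" "b \<in> carrier R" "t \<in> carrier R" "c \<in> carrier R" "r \<in> carrier R"
      "u \<in> carrier R" "u' \<in> carrier R" using c by auto
    have "(u \<otimes> u' \<otimes> t) \<otimes> a \<otimes> r = (u \<otimes> a \<otimes> t) \<otimes> (u' \<otimes> r)" using cc by algebra
    also have "\<dots> = (u \<otimes> b \<otimes> s) \<otimes> (u' \<otimes> r)" using e1 by simp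
    also have "\<dots> = (u' \<otimes> b \<otimes> r) \<otimes> (u \<otimes> s)" using cc by algebra
    also have "\<dots> = (u' \<otimes> c \<otimes> t) \<otimes> (u \<otimes> s)" using e2 by simp
    also have "\<dots> = (u \<otimes> u' \<otimes> t) \<otimes> c \<otimes> s" using cc by algebra
    finally show "(x, z) \<in> loc_rel R M" unfolding x z loc_rel_iff using c w by auto
  qed
  show "loc_rel R M \<subseteq> (carrier R \<times> S) \<times> carrier R \<times> S" unfolding loc_rel_def by auto
qed

lemma loc_class_eq_iff:
  assumes "a \<in> carrier R" "s \<in> S" "b \<in> carrier R" "t \<in> S"
  shows "loc_class R M a s = loc_class R M b t \<longleftrightarrow> (\<exists>u\<in>S. u \<otimes> a \<otimes> t = u \<otimes> b \<otimes> s)"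
  using equiv_class_eq_iff[OF loc_rel_equiv, of "(a, s)" "(b, t)"] assms
  unfolding loc_class_def by (auto simp: loc_rel_iff)

lemma loc_class_self: "a \<in> carrier R \<Longrightarrow> s \<in> S \<Longrightarrow> (a, s) \<in> loc_class R M a s"
  unfolding loc_class_def using loc_rel_equiv unfolding equiv_def refl_on_def by auto

lemma loc_class_memD:
  assumes "(a', s') \<in> loc_class R M a s"
  shows "a \<in> carrier R \<and> s \<in> S \<and> a' \<in> carrier R \<and> s' \<in> S \<and> (\<exists>u\<in>S. u \<otimes> a \<otimes> s' = u \<otimes> a' \<otimes> s)"
  using assms unfolding loc_class_def by (auto simp: loc_rel_iff)

lemma carrier_RM: "carrier RM = {loc_class R M a s | a s. a \<in> carrier R \<and> s \<in> S}"
  unfolding localization_def quotient_def loc_class_def by auto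

lemma loc_class_closed: "a \<in> carrier R \<Longrightarrow> s \<in> S \<Longrightarrow> loc_class R M a s \<in> carrier RM"
  unfolding carrier_RM by auto

lemma mult_loc_class:
  assumes a: "a \<in> carrier R" "s \<in> S" and b: "b \<in> carrier R" "t \<in> S"
  shows "loc_class R M a s \<otimes>\<^bsub>RM\<^esub> loc_class R M b t = loc_class R M (a \<otimes> b) (s \<otimes> t)"
proof -
  have st: "s \<otimes> t \<in> S" using mult_S a b by auto
  have each: "loc_class R M (a' \<otimes> b') (s' \<otimes> t') = loc_class R M (a \<otimes> b) (s \<otimes> t)"
    if m1: "(a', s') \<in> loc_class R M a s" and m2: "(b', t') \<in> loc_class R M b t" for a' s' b' t'
  proof -
    obtain u where u: "u \<in> S" "u \<otimes> a \<otimes> s' = u \<otimes> a' \<otimes> s" and c1: "a' \<in> carrier R" "s' \<in> S"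
      using loc_class_memD[OF m1] by auto
    obtain u' where u': "u' \<in> S" "u' \<otimes> b \<otimes> t' = u' \<otimes> b' \<otimes> t" and c2: "b' \<in> carrier R" "t' \<in> S"
      using loc_class_memD[OF m2] by auto
    have st': "s' \<otimes> t' \<in> S" using mult_S c1 c2 by auto
    have uc: "u \<in> carrier R" "u' \<in> carrier R" using u(1) u'(1) by auto
    have rearrange: "(u \<otimes> u') \<otimes> (a0 \<otimes> b0) \<otimes> (s0 \<otimes> t0) = (u \<otimes> a0 \<otimes> s0) \<otimes> (u' \<otimes> b0 \<otimes> t0)"
      if "a0 \<in> carrier R" "b0 \<in> carrier R" "s0 \<in> carrier R" "t0 \<in> carrier R" for a0 b0 s0 t0
      using that uc by (simp add: m_ac)
    have "(u \<otimes> u') \<otimes> (a' \<otimes> b') \<otimes> (s \<otimes> t) = (u \<otimes> a' \<otimes> s) \<otimes> (u' \<otimes> b' \<otimes> t)"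
      using rearrange c1 c2 a b by auto
    also have "\<dots> = (u \<otimes> a \<otimes> s') \<otimes> (u' \<otimes> b \<otimes> t')" using u u' by simp
    also have "\<dots> = (u \<otimes> u') \<otimes> (a \<otimes> b) \<otimes> (s' \<otimes> t')"
      using rearrange[of a b s' t'] c1 c2 a b by auto
    finally show ?thesis using loc_class_eq_iff[of "a' \<otimes> b'" "s' \<otimes> t'" "a \<otimes> b" "s \<otimes> t"] st st' mult_S u u' c1 c2 a b
      by (auto intro!: bexI[of _ "u \<otimes> u'"])
  qed
  have "loc_mult R M (loc_class R M a s) (loc_class R M b t) = loc_class R M (a \<otimes> b) (s \<otimes> t)"
    unfolding loc_mult_def
  proof
    show "\<Union>{loc_class R M (a' \<otimes> b') (s' \<otimes> t') |a' s' b' t'. (a', s') \<in> loc_class R M a s \<and> (b', t') \<in> loc_class R M b t}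
        \<subseteq> loc_class R M (a \<otimes> b) (s \<otimes> t)" using each by blast
    show "loc_class R M (a \<otimes> b) (s \<otimes> t) \<subseteq> \<Union>{loc_class R M (a' \<otimes> b') (s' \<otimes> t') |a' s' b' t'. (a', s') \<in> loc_class R M a s \<and> (b', t') \<in> loc_class R M b t}"
      using loc_class_self[OF a] loc_class_self[OF b] by blast
  qed
  then show ?thesis unfolding localization_def by simp
qed

lemma add_loc_class:
  assumes a: "a \<in> carrier R" "s \<in> S" and b: "b \<in> carrier R" "t \<in> S"
  shows "loc_class R M a s \<oplus>\<^bsub>RM\<^esub> loc_class R M b t = loc_class R M (a \<otimes> t \<oplus> b \<otimes> s) (s \<otimes> t)"
proof -
  have st: "s \<otimes> t \<in> S" using mult_S a b by auto
  have each: "loc_class R M (a' \<otimes> t' \<oplus> b' \<otimes> s') (s' \<otimes> t') = loc_class R M (a \<otimes> t \<oplus> b \<otimes> s) (s \<otimes> t)"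
    if m1: "(a', s') \<in> loc_class R M a s" and m2: "(b', t') \<in> loc_class R M b t" for a' s' b' t'
  proof -
    obtain u where u: "u \<in> S" "u \<otimes> a \<otimes> s' = u \<otimes> a' \<otimes> s" and c1: "a' \<in> carrier R" "s' \<in> S"
      using loc_class_memD[OF m1] by auto
    obtain u' where u': "u' \<in> S" "u' \<otimes> b \<otimes> t' = u' \<otimes> b' \<otimes> t" and c2: "b' \<in> carrier R" "t' \<in> S"
      using loc_class_memD[OF m2] by auto
    have st': "s' \<otimes> t' \<in> S" using mult_S c1 c2 by auto
    have uc: "u \<in> carrier R" "u' \<in> carrier R" using u(1) u'(1) by auto
    have rearrange: "(u \<otimes> u') \<otimes> (a0 \<otimes> t0 \<oplus> b0 \<otimes> s0) \<otimes> (s1 \<otimes> t1) =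
        (u \<otimes> a0 \<otimes> s1) \<otimes> (u' \<otimes> t0 \<otimes> t1) \<oplus> (u' \<otimes> b0 \<otimes> t1) \<otimes> (u \<otimes> s0 \<otimes> s1)"
      if "a0 \<in> carrier R" "b0 \<in> carrier R" "s0 \<in> carrier R" "t0 \<in> carrier R"
        "s1 \<in> carrier R" "t1 \<in> carrier R" for a0 b0 s0 t0 s1 t1
      using that uc by algebra
    have "(u \<otimes> u') \<otimes> (a' \<otimes> t' \<oplus> b' \<otimes> s') \<otimes> (s \<otimes> t) =
        (u \<otimes> a' \<otimes> s) \<otimes> (u' \<otimes> t' \<otimes> t) \<oplus> (u' \<otimes> b' \<otimes> t) \<otimes> (u \<otimes> s' \<otimes> s)"
      using rearrange c1 c2 a b by auto
    also have "\<dots> = (u \<otimes> a \<otimes> s') \<otimes> (u' \<otimes> t \<otimes> t') \<oplus> (u' \<otimes> b \<otimes> t') \<otimes> (u \<otimes> s \<otimes> s')"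
    proof -
      have "u' \<otimes> t' \<otimes> t = u' \<otimes> t \<otimes> t'" "u \<otimes> s' \<otimes> s = u \<otimes> s \<otimes> s'"
        using u u' c1 c2 a b by (simp_all add: m_assoc m_comm m_lcomm)
      then show ?thesis using u u' by simp
    qed
    also have "\<dots> = (u \<otimes> u') \<otimes> (a \<otimes> t \<oplus> b \<otimes> s) \<otimes> (s' \<otimes> t')"
      using rearrange[of a b s t s' t'] c1 c2 a b by auto
    finally show ?thesis
      using loc_class_eq_iff[of "a' \<otimes> t' \<oplus> b' \<otimes> s'" "s' \<otimes> t'" "a \<otimes> t \<oplus> b \<otimes> s" "s \<otimes> t"] st st' mult_S u u' c1 c2 a b
      by (auto intro!: bexI[of _ "u \<otimes> u'"])
  qed
  have "loc_add R M (loc_class R M a s) (loc_class R M b t) = loc_class R M (a \<otimes> t \<oplus> b \<otimes> s) (s \<otimes> t)"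
    unfolding loc_add_def
  proof
    show "\<Union>{loc_class R M (a' \<otimes> t' \<oplus> b' \<otimes> s') (s' \<otimes> t') |a' s' b' t'. (a', s') \<in> loc_class R M a s \<and> (b', t') \<in> loc_class R M b t}
        \<subseteq> loc_class R M (a \<otimes> t \<oplus> b \<otimes> s) (s \<otimes> t)" using each by blast
    show "loc_class R M (a \<otimes> t \<oplus> b \<otimes> s) (s \<otimes> t) \<subseteq> \<Union>{loc_class R M (a' \<otimes> t' \<oplus> b' \<otimes> s') (s' \<otimes> t') |a' s' b' t'. (a', s') \<in> loc_class R M a s \<and> (b', t') \<in> loc_class R M b t}"
      using loc_class_self[OF a] loc_class_self[OF b] by blast
  qed
  then show ?thesis unfolding localization_def by simp
qed

lemma zero_RM: "\<zero>\<^bsub>RM\<^esub> = loc_class R M \<zero> \<one>" unfolding localization_def by simp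
lemma one_RM: "\<one>\<^bsub>RM\<^esub> = loc_class R M \<one> \<one>" unfolding localization_def by simp

lemma to_loc_hom: "to_loc \<in> ring_hom R RM"
proof (rule ring_hom_memI)
  show "\<And>x. x \<in> carrier R \<Longrightarrow> to_loc x \<in> carrier RM" unfolding to_loc_def using loc_class_closed one_S by auto
  show "\<And>x y. x \<in> carrier R \<Longrightarrow> y \<in> carrier R \<Longrightarrow> to_loc (x \<otimes> y) = to_loc x \<otimes>\<^bsub>RM\<^esub> to_loc y"
    unfolding to_loc_def using mult_loc_class one_S by simp
  show "\<And>x y. x \<in> carrier R \<Longrightarrow> y \<in> carrier R \<Longrightarrow> to_loc (x \<oplus> y) = to_loc x \<oplus>\<^bsub>RM\<^esub> to_loc y"
    unfolding to_loc_def using add_loc_class one_S by simp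
  show "to_loc \<one> = \<one>\<^bsub>RM\<^esub>" unfolding to_loc_def one_RM ..
qed

lemma to_loc_eq_zeroD:
  assumes "b \<in> carrier R" "to_loc b = \<zero>\<^bsub>RM\<^esub>"
  shows "\<exists>u\<in>S. u \<otimes> b = \<zero>"
proof -
  have "loc_class R M b \<one> = loc_class R M \<zero> \<one>" using assms unfolding to_loc_def zero_RM by simp
  then obtain u where "u \<in> S" "u \<otimes> b \<otimes> \<one> = u \<otimes> \<zero> \<otimes> \<one>" using loc_class_eq_iff one_S assms by auto
  then show ?thesis using assms by auto
qed

lemma clear_denominator:
  assumes "v \<in> carrier RM"
  shows "\<exists>t\<in>S. \<exists>a\<in>carrier R. to_loc t \<otimes>\<^bsub>RM\<^esub> v = to_loc a"
proof -
  obtain a t where at: "a \<in> carrier R" "t \<in> S" "v = loc_class R M a t" using assms unfolding carrier_RM by auto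
  have "to_loc t \<otimes>\<^bsub>RM\<^esub> v = loc_class R M (t \<otimes> a) (\<one> \<otimes> t)" unfolding to_loc_def using at mult_loc_class one_S by simp
  also have "\<dots> = to_loc a" unfolding to_loc_def
    using loc_class_eq_iff[of "t \<otimes> a" "\<one> \<otimes> t" a \<one>] at one_S mult_S
    by (auto intro!: bexI[of _ \<one>] simp: m_comm m_lcomm)
  finally show ?thesis using at by auto
qed

lemma to_loc_unit:
  assumes "s \<in> S"
  shows "\<exists>w\<in>carrier RM. to_loc s \<otimes>\<^bsub>RM\<^esub> w = \<one>\<^bsub>RM\<^esub>"
proof -
  have "to_loc s \<otimes>\<^bsub>RM\<^esub> loc_class R M \<one> s = loc_class R M (s \<otimes> \<one>) (\<one> \<otimes> s)"
    unfolding to_loc_def using mult_loc_class one_S assms by simp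
  also have "\<dots> = \<one>\<^bsub>RM\<^esub>" unfolding one_RM
    using loc_class_eq_iff[of "s \<otimes> \<one>" "\<one> \<otimes> s" \<one> \<one>] assms one_S by (auto intro!: bexI[of _ \<one>])
  finally show ?thesis using loc_class_closed[of \<one> s] assms by auto
qed

end

locale chain_localization = max_localization +
  assumes loc_fg_ann: "fg_ann_trivial_chain_ring (localization R M)"

sublocale chain_localization \<subseteq> L: fg_ann_trivial_chain_ring "localization R M" by (rule loc_fg_ann)

sublocale chain_localization \<subseteq> H: ring_hom_cring R "localization R M" to_loc
  unfolding ring_hom_cring_def ring_hom_cring_axioms_def
  using is_cring L.is_cring to_loc_hom by auto

context chain_localization
begin

lemma common_denominator:
  assumes "finite I" "\<forall>i\<in>I. v i \<in> carrier RM"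
  shows "\<exists>s\<in>S. \<exists>y. \<forall>i\<in>I. y i \<in> carrier R \<and> to_loc s \<otimes>\<^bsub>RM\<^esub> v i = to_loc (y i)"
  using assms
proof (induction I rule: finite_induct)
  case empty then show ?case using one_S by blast
next
  case (insert k I)
  then obtain s y where s: "s \<in> S" and y: "\<forall>i\<in>I. y i \<in> carrier R \<and> to_loc s \<otimes>\<^bsub>RM\<^esub> v i = to_loc (y i)"
    by blast
  obtain t a where t: "t \<in> S" and a: "a \<in> carrier R" "to_loc t \<otimes>\<^bsub>RM\<^esub> v k = to_loc a"
    using clear_denominator insert.prems by blast
  have st: "s \<in> carrier R" "t \<in> carrier R" using s t by auto
  define y' where "y' i = (if i = k then s \<otimes> a else t \<otimes> y i)" for i
  have "y' i \<in> carrier R \<and> to_loc (s \<otimes> t) \<otimes>\<^bsub>RM\<^esub> v i = to_loc (y' i)" if "i \<in> insert k I" for i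
  proof (cases "i = k")
    case True
    have "to_loc (s \<otimes> t) \<otimes>\<^bsub>RM\<^esub> v k = to_loc s \<otimes>\<^bsub>RM\<^esub> (to_loc t \<otimes>\<^bsub>RM\<^esub> v k)"
      using st insert.prems by (simp add: L.m_assoc)
    then show ?thesis using True a st unfolding y'_def by simp
  next
    case False
    then have i: "i \<in> I" using that by blast
    have "to_loc (s \<otimes> t) \<otimes>\<^bsub>RM\<^esub> v i = to_loc t \<otimes>\<^bsub>RM\<^esub> (to_loc s \<otimes>\<^bsub>RM\<^esub> v i)"
      using st insert.prems i by (simp add: L.m_comm[of "to_loc s" "to_loc t"] L.m_assoc)
    then show ?thesis using False i y st unfolding y'_def by simp
  qed
  then show ?case using mult_S[OF s t] by blast
qed

lemma common_annihilator:
  assumes "finite I" "\<forall>i\<in>I. b i \<in> carrier R \<and> to_loc (b i) = \<zero>\<^bsub>RM\<^esub>"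
  shows "\<exists>u\<in>S. \<forall>i\<in>I. u \<otimes> b i = \<zero>"
  using assms
proof (induction I rule: finite_induct)
  case empty then show ?case using one_S by blast
next
  case (insert k I)
  then obtain u where u: "u \<in> S" "\<forall>i\<in>I. u \<otimes> b i = \<zero>" by blast
  obtain u' where u': "u' \<in> S" "u' \<otimes> b k = \<zero>" using to_loc_eq_zeroD insert.prems by blast
  have uc: "u \<in> carrier R" "u' \<in> carrier R" using u(1) u'(1) by auto
  have "(u \<otimes> u') \<otimes> b i = \<zero>" if "i \<in> insert k I" for i
  proof -
    have bi: "b i \<in> carrier R" using that insert.prems by blast
    show ?thesis
    proof (cases "i = k")
      case True then show ?thesis using u'(2) uc bi by (simp add: m_assoc)
    next
      case False
      then have "u \<otimes> b i = \<zero>" using u(2) that by blast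
      then show ?thesis using uc bi by (simp add: m_comm[of u u'] m_assoc)
    qed
  qed
  then show ?case using mult_S[OF u(1) u'(1)] by blast
qed

lemma common_equalizer:
  assumes "finite I" "\<forall>i\<in>I. b i \<in> carrier R \<and> b' i \<in> carrier R \<and> to_loc (b i) = to_loc (b' i)"
  shows "\<exists>u\<in>S. \<forall>i\<in>I. u \<otimes> b i = u \<otimes> b' i"
proof -
  have "\<forall>i\<in>I. b i \<ominus> b' i \<in> carrier R \<and> to_loc (b i \<ominus> b' i) = \<zero>\<^bsub>RM\<^esub>"
  proof
    fix i assume "i \<in> I"
    have bc: "b i \<in> carrier R" "b' i \<in> carrier R" and eq: "to_loc (b i) = to_loc (b' i)"
      using assms(2) \<open>i \<in> I\<close> by auto
    have "to_loc (b i \<ominus> b' i) = to_loc (b' i) \<ominus>\<^bsub>RM\<^esub> to_loc (b' i)"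
      using bc eq by (simp add: a_minus_def)
    then show "b i \<ominus> b' i \<in> carrier R \<and> to_loc (b i \<ominus> b' i) = \<zero>\<^bsub>RM\<^esub>"
      using bc by (simp add: a_minus_def L.r_neg)
  qed
  then obtain u where u: "u \<in> S" "\<forall>i\<in>I. u \<otimes> (b i \<ominus> b' i) = \<zero>"
    using common_annihilator[OF assms(1), of "\<lambda>i. b i \<ominus> b' i"] by blast
  have "u \<otimes> b i = u \<otimes> b' i" if "i \<in> I" for i
  proof -
    have bc: "b i \<in> carrier R" "b' i \<in> carrier R" "u \<in> carrier R" using assms(2) that u(1) by auto
    then have "u \<otimes> b i \<ominus> u \<otimes> b' i = \<zero>" using u(2)[rule_format, OF that] by (simp add: a_minus_def r_distr r_minus)
    then show ?thesis using minus_eq_zero_iff bc by simp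
  qed
  then show ?thesis using u(1) by blast
qed

lemma to_loc_matmul:
  assumes "\<forall>j<n. A i j \<in> carrier R \<and> B j c \<in> carrier R"
  shows "to_loc (matmul R A B n i c) = matmul RM (\<lambda>i j. to_loc (A i j)) (\<lambda>j c. to_loc (B j c)) n i c"
proof -
  have "to_loc (matmul R A B n i c) = finsum RM (to_loc \<circ> (\<lambda>j. A i j \<otimes> B j c)) {..<n}"
    unfolding matmul_def using assms by (intro H.hom_finsum) auto
  also have "\<dots> = matmul RM (\<lambda>i j. to_loc (A i j)) (\<lambda>j c. to_loc (B j c)) n i c"
    unfolding matmul_def using assms by (intro L.finsum_cong') (simp_all add: Pi_def)
  finally show ?thesis .
qed

lemma to_loc_matvec:
  assumes A: "mat_over R A m k" and y: "y \<in> fvec R k"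
  shows "colcomb RM (\<lambda>l i. to_loc (A i l)) m {..<k} (\<lambda>c. to_loc (y c)) = (\<lambda>i. to_loc (matvec R A m k y i))"
proof (rule ext)
  fix i
  show "colcomb RM (\<lambda>l i. to_loc (A i l)) m {..<k} (\<lambda>c. to_loc (y c)) i = to_loc (matvec R A m k y i)"
  proof (cases "i < m")
    case True
    have Ay: "A i l \<in> carrier R" "y l \<in> carrier R" if "l < k" for l
      using A y True that by (auto simp: mat_over_def fvec_carrier)
    have "to_loc (\<Oplus>l\<in>{..<k}. A i l \<otimes> y l) = finsum RM (to_loc \<circ> (\<lambda>l. A i l \<otimes> y l)) {..<k}"
      using Ay by (intro H.hom_finsum) auto
    also have "\<dots> = (\<Oplus>\<^bsub>RM\<^esub> l\<in>{..<k}. to_loc (A i l) \<otimes>\<^bsub>RM\<^esub> to_loc (y l))"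
      using Ay by (intro L.finsum_cong') (simp_all add: Pi_def)
    finally show ?thesis unfolding colcomb_def matvec_def using True by simp
  qed (simp add: colcomb_def matvec_def)
qed

lemma lift_loc_kernel_vector:
  assumes A: "mat_over R A m k" and x: "x \<in> colker RM (\<lambda>l i. to_loc (A i l)) m {..<k}"
  shows "\<exists>t\<in>S. \<exists>y\<in>fvec R k. matvec R A m k y = (\<lambda>_. \<zero>) \<and> (\<forall>c. to_loc t \<otimes>\<^bsub>RM\<^esub> x c = to_loc (y c))"
proof -
  let ?a = "\<lambda>l i. to_loc (A i l)"
  have xv: "x \<in> vecs RM {..<k}" and x0: "colcomb RM ?a m {..<k} x = vzero RM"
    using x unfolding colker_def by auto
  have xc: "x c \<in> carrier RM" for c using L.vecs_carrier[OF xv] .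
  have aRM: "\<forall>l\<in>{..<k}. \<forall>i<m. ?a l i \<in> carrier RM" using A unfolding mat_over_def by auto
  have "\<forall>c\<in>{..<k}. x c \<in> carrier RM" using xc by blast
  then obtain s y where s: "s \<in> S" and sy: "\<forall>c\<in>{..<k}. y c \<in> carrier R \<and> to_loc s \<otimes>\<^bsub>RM\<^esub> x c = to_loc (y c)"
    using common_denominator[of "{..<k}" x] by blast
  have sc: "s \<in> carrier R" using s by blast
  define y' where "y' c = (if c < k then y c else \<zero>)" for c
  have y': "y' \<in> fvec R k" unfolding y'_def fvec_def using sy by auto
  have sy': "to_loc s \<otimes>\<^bsub>RM\<^esub> x c = to_loc (y' c)" for c
  proof (cases "c < k")
    case False
    then have "x c = \<zero>\<^bsub>RM\<^esub>" using xv unfolding vecs_def by simp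
    then show ?thesis using False sc unfolding y'_def by simp
  qed (use sy y'_def in simp)
  have "(\<lambda>c. to_loc (y' c)) = vsmult RM (to_loc s) x" by (simp add: vsmult_def sy')
  then have "(\<lambda>i. to_loc (matvec R A m k y' i)) = vsmult RM (to_loc s) (vzero RM)"
    using to_loc_matvec[OF A y'] L.colcomb_vsmult[OF aRM xv _ finite_lessThan, of "to_loc s"] x0 sc by simp
  then have "to_loc (matvec R A m k y' i) = to_loc \<zero>" for i
    using sc by (simp add: vsmult_def vzero_def fun_eq_iff)
  then have "\<forall>i\<in>{..<m}. matvec R A m k y' i \<in> carrier R \<and> \<zero> \<in> carrier R \<and>
      to_loc (matvec R A m k y' i) = to_loc \<zero>"
    using matvec_carrier[OF A y'] by blast
  then obtain u where u: "u \<in> S" "\<forall>i\<in>{..<m}. u \<otimes> matvec R A m k y' i = u \<otimes> \<zero>"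
    using common_equalizer[of "{..<m}" "matvec R A m k y'" "\<lambda>_. \<zero>"] by blast
  have uc: "u \<in> carrier R" using u(1) by blast
  define z where "z c = u \<otimes> y' c" for c
  have z: "z \<in> fvec R k" unfolding z_def using y' uc unfolding fvec_def by auto
  have "matvec R A m k z = (\<lambda>i. u \<otimes> matvec R A m k y' i)"
    unfolding z_def using matvec_smult[OF A y' uc] by simp
  also have "\<dots> = (\<lambda>_. \<zero>)" using u(2) uc by (auto simp: fun_eq_iff matvec_def)
  finally have "matvec R A m k z = (\<lambda>_. \<zero>)" .
  moreover have "to_loc (u \<otimes> s) \<otimes>\<^bsub>RM\<^esub> x c = to_loc (z c)" for c
  proof -
    have "to_loc (u \<otimes> s) \<otimes>\<^bsub>RM\<^esub> x c = to_loc u \<otimes>\<^bsub>RM\<^esub> (to_loc s \<otimes>\<^bsub>RM\<^esub> x c)"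
      using uc sc xc by (simp add: L.m_assoc)
    then show ?thesis unfolding z_def sy' using uc y' by (simp add: fvec_carrier)
  qed
  ultimately show ?thesis using z mult_S[OF u(1) s] by blast
qed


lemma lift_loc_matrix:
  fixes m n :: nat
  assumes P: "mat_over RM P m n"
  shows "\<exists>s\<in>S. \<exists>T0. mat_over R T0 m n \<and> (\<forall>r<m. \<forall>c<n. to_loc (T0 r c) = to_loc s \<otimes>\<^bsub>RM\<^esub> P r c)"
proof -
  have "\<forall>p\<in>{..<m} \<times> {..<n}. P (fst p) (snd p) \<in> carrier RM" using P unfolding mat_over_def by auto
  then obtain s Y where s: "s \<in> S"
    and Y: "\<forall>p\<in>{..<m} \<times> {..<n}. Y p \<in> carrier R \<and> to_loc s \<otimes>\<^bsub>RM\<^esub> P (fst p) (snd p) = to_loc (Y p)"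
    using common_denominator[of "{..<m} \<times> {..<n}" "\<lambda>p. P (fst p) (snd p)"] by blast
  have Y': "Y (r, c) \<in> carrier R \<and> to_loc (Y (r, c)) = to_loc s \<otimes>\<^bsub>RM\<^esub> P r c" if "r < m" "c < n" for r c
    using bspec[OF Y, of "(r, c)"] that by simp
  then have "mat_over R (\<lambda>r c. Y (r, c)) m n" unfolding mat_over_def by blast
  then show ?thesis using s Y' by blast
qed

lemma lift_loc_matrix_eq:
  fixes X Y :: "nat \<Rightarrow> nat \<Rightarrow> 'a" and m n :: nat
  assumes "\<And>i c. i < m \<Longrightarrow> c < n \<Longrightarrow> X i c \<in> carrier R \<and> Y i c \<in> carrier R \<and> to_loc (X i c) = to_loc (Y i c)"
  shows "\<exists>u\<in>S. \<forall>i<m. \<forall>c<n. u \<otimes> X i c = u \<otimes> Y i c"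
proof -
  have "\<forall>p\<in>{..<m} \<times> {..<n}. X (fst p) (snd p) \<in> carrier R \<and> Y (fst p) (snd p) \<in> carrier R \<and>
      to_loc (X (fst p) (snd p)) = to_loc (Y (fst p) (snd p))"
    using assms by (simp add: mem_Times_iff)
  from common_equalizer[OF finite_cartesian_product[OF finite_lessThan[of m] finite_lessThan[of n]] this]
  obtain u where "u \<in> S" "\<forall>p\<in>{..<m} \<times> {..<n}. u \<otimes> X (fst p) (snd p) = u \<otimes> Y (fst p) (snd p)" by blast
  then show ?thesis by (intro bexI[of _ u]) auto
qed

context
  fixes A1 A2 :: "nat \<Rightarrow> nat \<Rightarrow> 'a" and k0 k1 k2 :: nat
  assumes A1: "mat_over R A1 k0 k1" and A2: "mat_over R A2 k1 k2"
    and exact: "\<forall>x\<in>fvec R k1. matvec R A1 k0 k1 x = (\<lambda>_. \<zero>) \<longleftrightarrow> (\<exists>z\<in>fvec R k2. x = matvec R A2 k1 k2 z)"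
begin

definition loc_col :: "nat \<Rightarrow> nat \<Rightarrow> ('a \<times> 'a) set" where
  "loc_col l = (\<lambda>c. if c < k1 then to_loc (A2 c l) else \<zero>\<^bsub>RM\<^esub>)"

lemma loc_col_in_kernel:
  assumes l: "l < k2"
  shows "loc_col l \<in> colker RM (\<lambda>l i. to_loc (A1 i l)) k0 {..<k1}"
proof -
  define y where "y c = (if c < k1 then A2 c l else \<zero>)" for c
  have y: "y \<in> fvec R k1" using A2 l unfolding y_def fvec_def mat_over_def by auto
  have "y = matvec R A2 k1 k2 (unit_vec R l)"
  proof
    fix c
    have "(\<Oplus>d\<in>{..<k2}. A2 c d \<otimes> unit_vec R l d) = A2 c l" if "c < k1"
      using A2 l that finsum_delta[of "{..<k2}" l "\<lambda>d. A2 c d"] unfolding unit_vec_def mat_over_def by auto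
    then show "y c = matvec R A2 k1 k2 (unit_vec R l) c" unfolding y_def matvec_def by simp
  qed
  moreover have "unit_vec R l \<in> fvec R k2" using l unfolding unit_vec_def fvec_def by auto
  ultimately have "matvec R A1 k0 k1 y = (\<lambda>_. \<zero>)" using exact y by blast
  then have "colcomb RM (\<lambda>l i. to_loc (A1 i l)) k0 {..<k1} (\<lambda>c. to_loc (y c)) = vzero RM"
    using to_loc_matvec[OF A1 y] by (simp add: vzero_def)
  moreover have "(\<lambda>c. to_loc (y c)) = loc_col l" unfolding y_def loc_col_def by (simp add: fun_eq_iff)
  moreover have "loc_col l \<in> vecs RM {..<k1}" using A2 l unfolding loc_col_def vecs_def mat_over_def by auto
  ultimately show ?thesis unfolding colker_def by simp
qed

lemma loc_kernel_fin_gen: "fin_gen RM (colker RM (\<lambda>l i. to_loc (A1 i l)) k0 {..<k1})"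
  unfolding fin_gen_def
proof (intro exI conjI)
  let ?G = "loc_col ` {..<k2}"
  show "finite ?G" by simp
  show G: "?G \<subseteq> colker RM (\<lambda>l i. to_loc (A1 i l)) k0 {..<k1}" using loc_col_in_kernel by blast
  show "colker RM (\<lambda>l i. to_loc (A1 i l)) k0 {..<k1} \<subseteq> vspan RM ?G"
  proof
    fix x assume x: "x \<in> colker RM (\<lambda>l i. to_loc (A1 i l)) k0 {..<k1}"
    then have xv: "x \<in> vecs RM {..<k1}" unfolding colker_def by blast
    obtain t y where t: "t \<in> S" and y: "y \<in> fvec R k1" "matvec R A1 k0 k1 y = (\<lambda>_. \<zero>)"
      and ty: "\<forall>c. to_loc t \<otimes>\<^bsub>RM\<^esub> x c = to_loc (y c)"
      using lift_loc_kernel_vector[OF A1 x] by blast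
    obtain z where z: "z \<in> fvec R k2" "y = matvec R A2 k1 k2 z" using exact y by blast
    obtain w where w: "w \<in> carrier RM" "to_loc t \<otimes>\<^bsub>RM\<^esub> w = \<one>\<^bsub>RM\<^esub>" using to_loc_unit[OF t] by blast
    have tc: "t \<in> carrier R" using t by blast
    have zc: "\<And>l. to_loc (z l) \<in> carrier RM" using z by (simp add: fvec_carrier)
    have colc: "\<And>l c. l < k2 \<Longrightarrow> loc_col l c \<in> carrier RM"
      using A2 unfolding loc_col_def mat_over_def by auto
    have "x = (\<lambda>c. \<Oplus>\<^bsub>RM\<^esub> l\<in>{..<k2}. (w \<otimes>\<^bsub>RM\<^esub> to_loc (z l)) \<otimes>\<^bsub>RM\<^esub> loc_col l c)"
    proof
      fix c
      show "x c = (\<Oplus>\<^bsub>RM\<^esub> l\<in>{..<k2}. (w \<otimes>\<^bsub>RM\<^esub> to_loc (z l)) \<otimes>\<^bsub>RM\<^esub> loc_col l c)"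
      proof (cases "c < k1")
        case True
        have A2c: "\<And>l. l < k2 \<Longrightarrow> to_loc (A2 c l) \<in> carrier RM" using A2 True unfolding mat_over_def by auto
        have "x c = w \<otimes>\<^bsub>RM\<^esub> (to_loc t \<otimes>\<^bsub>RM\<^esub> x c)"
          using w tc L.vecs_carrier[OF xv] by (simp add: L.m_assoc[symmetric] L.m_comm[of w])
        also have "\<dots> = w \<otimes>\<^bsub>RM\<^esub> to_loc (matvec R A2 k1 k2 z c)" using ty z(2) by simp
        also have "to_loc (matvec R A2 k1 k2 z c) =
            (\<Oplus>\<^bsub>RM\<^esub> l\<in>{..<k2}. to_loc (A2 c l) \<otimes>\<^bsub>RM\<^esub> to_loc (z l))"
          using fun_cong[OF to_loc_matvec[OF A2 z(1)], of c] True by (simp add: colcomb_def)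
        also have "w \<otimes>\<^bsub>RM\<^esub> \<dots> = (\<Oplus>\<^bsub>RM\<^esub> l\<in>{..<k2}. w \<otimes>\<^bsub>RM\<^esub> (to_loc (A2 c l) \<otimes>\<^bsub>RM\<^esub> to_loc (z l)))"
          using w A2c zc by (intro L.finsum_rdistr) auto
        also have "\<dots> = (\<Oplus>\<^bsub>RM\<^esub> l\<in>{..<k2}. (w \<otimes>\<^bsub>RM\<^esub> to_loc (z l)) \<otimes>\<^bsub>RM\<^esub> loc_col l c)"
          using w A2c zc True by (intro L.finsum_cong') (simp_all add: loc_col_def L.m_ac Pi_def)
        finally show ?thesis .
      next
        case False
        then have "(\<Oplus>\<^bsub>RM\<^esub> l\<in>{..<k2}. (w \<otimes>\<^bsub>RM\<^esub> to_loc (z l)) \<otimes>\<^bsub>RM\<^esub> loc_col l c) = (\<Oplus>\<^bsub>RM\<^esub> l\<in>{..<k2}. \<zero>\<^bsub>RM\<^esub>)"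
          using w zc by (intro L.finsum_cong') (simp_all add: loc_col_def)
        then show ?thesis using False xv unfolding vecs_def by simp
      qed
    qed
    moreover have "loc_col ` {..<k2} \<subseteq> vecs RM {..<k1}" using G unfolding colker_def by blast
    ultimately show "x \<in> vspan RM ?G"
      using w zc by (auto intro!: L.vspan_finsum)
  qed
qed

lemma loc_splitting_matrix:
  "\<exists>P. mat_over RM P k1 k1 \<and>
    (\<forall>i<k0. \<forall>c<k1. matmul RM (\<lambda>i j. to_loc (A1 i j)) P k1 i c = to_loc (A1 i c)) \<and>
    (\<forall>r<k1. \<forall>l<k2. matmul RM P (\<lambda>c l. to_loc (A2 c l)) k1 r l = \<zero>\<^bsub>RM\<^esub>)"
proof -
  let ?a = "\<lambda>l i. to_loc (A1 i l)"
  have aRM: "\<forall>l\<in>{..<k1}. \<forall>i<k0. ?a l i \<in> carrier RM" using A1 unfolding mat_over_def by auto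
  obtain f where f: "splits_kernel RM ?a k0 {..<k1} f"
    using L.kernel_splits[OF _ aRM loc_kernel_fin_gen] by blast
  have f_lin: "linear_endo RM {..<k1} f" using f unfolding splits_kernel_def by blast
  define P where "P r c = f (unit_vec RM c) r" for r c
  have Pc: "P r c \<in> carrier RM" if "c < k1" for r c
    using f_lin L.vecs_unit_vec[of c] that L.vecs_carrier unfolding P_def linear_endo_def by blast
  have "matmul RM (\<lambda>i j. to_loc (A1 i j)) P k1 i c = to_loc (A1 i c)" if i: "i < k0" and c: "c < k1" for i c
  proof -
    have e: "unit_vec RM c \<in> vecs RM {..<k1}" using c by (simp add: L.vecs_unit_vec)
    have "matmul RM (\<lambda>i j. to_loc (A1 i j)) P k1 i c = colcomb RM ?a k0 {..<k1} (f (unit_vec RM c)) i"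
      unfolding matmul_def colcomb_def P_def using i by simp
    also have "\<dots> = colcomb RM ?a k0 {..<k1} (unit_vec RM c) i" using f e unfolding splits_kernel_def by simp
    also have "\<dots> = to_loc (A1 i c)"
      unfolding colcomb_def unit_vec_def using i c aRM by (simp add: L.finsum_delta)
    finally show ?thesis .
  qed
  moreover have "matmul RM P (\<lambda>c l. to_loc (A2 c l)) k1 r l = \<zero>\<^bsub>RM\<^esub>" if r: "r < k1" and l: "l < k2" for r l
  proof -
    have col: "loc_col l \<in> colker RM ?a k0 {..<k1}" by (rule loc_col_in_kernel[OF l])
    then have "f (loc_col l) = vzero RM" using f unfolding splits_kernel_def by blast
    moreover have "f (loc_col l) r = (\<Oplus>\<^bsub>RM\<^esub> c\<in>{..<k1}. loc_col l c \<otimes>\<^bsub>RM\<^esub> P r c)"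
      using L.linear_endo_expand[OF f_lin _, of "loc_col l"] col unfolding colker_def P_def by simp
    moreover have "\<dots> = matmul RM P (\<lambda>c l. to_loc (A2 c l)) k1 r l"
      unfolding matmul_def loc_col_def using A2 l Pc by (intro L.finsum_cong') (auto simp: mat_over_def L.m_comm)
    ultimately show ?thesis by (simp add: vzero_def)
  qed
  moreover have "mat_over RM P k1 k1" using Pc unfolding mat_over_def by blast
  ultimately show ?thesis by blast
qed

lemma lift_loc_splitting:
  assumes P: "mat_over RM P k1 k1"
    and P1: "\<forall>i<k0. \<forall>c<k1. matmul RM (\<lambda>i j. to_loc (A1 i j)) P k1 i c = to_loc (A1 i c)"
    and P2: "\<forall>r<k1. \<forall>l<k2. matmul RM P (\<lambda>c l. to_loc (A2 c l)) k1 r l = \<zero>\<^bsub>RM\<^esub>"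
  shows "\<exists>\<rho>\<in>S. \<exists>T. splitting_matrix R A1 A2 k0 k1 k2 \<rho> T"
proof -
  obtain s T0 where s: "s \<in> S" and T0: "mat_over R T0 k1 k1"
    and T0_loc: "\<forall>r<k1. \<forall>c<k1. to_loc (T0 r c) = to_loc s \<otimes>\<^bsub>RM\<^esub> P r c"
    using lift_loc_matrix[OF P] by blast
  have sc: "s \<in> carrier R" using s by blast
  have A1c: "\<forall>j<k1. A1 i j \<in> carrier R" if "i < k0" for i using A1 that unfolding mat_over_def by auto
  have A2c: "\<forall>j<k1. A2 j l \<in> carrier R" if "l < k2" for l using A2 that unfolding mat_over_def by auto
  have T0c: "\<forall>j<k1. T0 j c \<in> carrier R \<and> T0 c j \<in> carrier R" if "c < k1" for c
    using T0 that unfolding mat_over_def by auto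
  have Pc: "\<forall>j<k1. P j c \<in> carrier RM \<and> P c j \<in> carrier RM" if "c < k1" for c
    using P that unfolding mat_over_def by auto
  have mc1: "matmul R A1 T0 k1 i c \<in> carrier R" if "i < k0" "c < k1" for i c
    using A1c T0c that unfolding matmul_def by (auto intro!: finsum_closed)
  have mc2: "matmul R T0 A2 k1 r l \<in> carrier R" if "r < k1" "l < k2" for r l
    using A2c T0c that unfolding matmul_def by (auto intro!: finsum_closed)
  have eq1: "matmul R A1 T0 k1 i c \<in> carrier R \<and> s \<otimes> A1 i c \<in> carrier R \<and>
      to_loc (matmul R A1 T0 k1 i c) = to_loc (s \<otimes> A1 i c)" if i: "i < k0" and c: "c < k1" for i c
  proof -
    have "to_loc (matmul R A1 T0 k1 i c) = matmul RM (\<lambda>i j. to_loc (A1 i j)) (\<lambda>j c. to_loc (T0 j c)) k1 i c"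
      using A1c[OF i] T0c[OF c] by (intro to_loc_matmul) auto
    also have "\<dots> = matmul RM (\<lambda>i j. to_loc (A1 i j)) (\<lambda>j c. to_loc s \<otimes>\<^bsub>RM\<^esub> P j c) k1 i c"
      unfolding matmul_def using A1c[OF i] Pc[OF c] c sc by (intro L.finsum_cong') (simp_all add: T0_loc)
    also have "\<dots> = to_loc s \<otimes>\<^bsub>RM\<^esub> matmul RM (\<lambda>i j. to_loc (A1 i j)) P k1 i c"
      using A1c[OF i] Pc[OF c] sc by (intro L.matmul_scale_right) auto
    finally show ?thesis using P1 i c sc A1c[OF i] mc1[OF i c] by simp
  qed
  have "\<exists>u\<in>S. \<forall>i<k0. \<forall>c<k1. u \<otimes> matmul R A1 T0 k1 i c = u \<otimes> (s \<otimes> A1 i c)"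
    by (rule lift_loc_matrix_eq[OF eq1])
  then obtain u1 where u1: "u1 \<in> S" "\<forall>i<k0. \<forall>c<k1. u1 \<otimes> matmul R A1 T0 k1 i c = u1 \<otimes> (s \<otimes> A1 i c)"
    by blast
  have eq2: "matmul R T0 A2 k1 r l \<in> carrier R \<and> \<zero> \<in> carrier R \<and>
      to_loc (matmul R T0 A2 k1 r l) = to_loc \<zero>" if r: "r < k1" and l: "l < k2" for r l
  proof -
    have "to_loc (matmul R T0 A2 k1 r l) = matmul RM (\<lambda>r j. to_loc (T0 r j)) (\<lambda>j l. to_loc (A2 j l)) k1 r l"
      using A2c[OF l] T0c[OF r] by (intro to_loc_matmul) auto
    also have "\<dots> = matmul RM (\<lambda>r j. to_loc s \<otimes>\<^bsub>RM\<^esub> P r j) (\<lambda>j l. to_loc (A2 j l)) k1 r l"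
      unfolding matmul_def using A2c[OF l] Pc[OF r] r sc by (intro L.finsum_cong') (simp_all add: T0_loc)
    also have "\<dots> = to_loc s \<otimes>\<^bsub>RM\<^esub> matmul RM P (\<lambda>c l. to_loc (A2 c l)) k1 r l"
      using A2c[OF l] Pc[OF r] sc by (intro L.matmul_scale_left) auto
    finally show ?thesis using P2 r l sc mc2[OF r l] by simp
  qed
  have "\<exists>u\<in>S. \<forall>r<k1. \<forall>l<k2. u \<otimes> matmul R T0 A2 k1 r l = u \<otimes> \<zero>"
    by (rule lift_loc_matrix_eq[OF eq2])
  then obtain u2 where u2: "u2 \<in> S" "\<forall>r<k1. \<forall>l<k2. u2 \<otimes> matmul R T0 A2 k1 r l = u2 \<otimes> \<zero>"
    by blast
  have uc: "u1 \<in> carrier R" "u2 \<in> carrier R" using u1(1) u2(1) by auto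
  define T where "T r c = (u2 \<otimes> u1) \<otimes> T0 r c" for r c
  have "mat_over R T k1 k1" using T0 uc unfolding T_def mat_over_def by auto
  moreover have "matmul R A1 T k1 i c = (u2 \<otimes> u1 \<otimes> s) \<otimes> A1 i c" if i: "i < k0" and c: "c < k1" for i c
  proof -
    have "matmul R A1 T k1 i c = u2 \<otimes> (u1 \<otimes> matmul R A1 T0 k1 i c)"
      unfolding T_def using A1c[OF i] T0c[OF c] uc c mc1[OF i c] by (subst matmul_scale_right) (auto simp: m_assoc)
    also have "\<dots> = (u2 \<otimes> u1 \<otimes> s) \<otimes> A1 i c" using u1(2) i c uc sc A1c[OF i] by (simp add: m_assoc)
    finally show ?thesis .
  qed
  moreover have "matmul R T A2 k1 r l = \<zero>" if r: "r < k1" and l: "l < k2" for r l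
  proof -
    have "matmul R T A2 k1 r l = u1 \<otimes> (u2 \<otimes> matmul R T0 A2 k1 r l)"
      unfolding T_def using A2c[OF l] T0c[OF r] uc r mc2[OF r l] by (subst matmul_scale_left) (auto simp: m_ac)
    then show ?thesis using u2(2) r l uc by simp
  qed
  moreover have "u2 \<otimes> u1 \<otimes> s \<in> S" using mult_S[OF mult_S[OF u2(1) u1(1)] s] .
  ultimately show ?thesis unfolding splitting_matrix_def by blast
qed

lemma local_splitting: "\<exists>\<rho>\<in>S. \<exists>T. splitting_matrix R A1 A2 k0 k1 k2 \<rho> T"
  using loc_splitting_matrix lift_loc_splitting by blast

end

end

section \<open>From local to global splittings\<close>

context cring
begin

lemma ideal_if_closed:
  assumes "J \<subseteq> carrier R" "\<zero> \<in> J" "\<And>a b. a \<in> J \<Longrightarrow> b \<in> J \<Longrightarrow> a \<oplus> b \<in> J"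
    and smult: "\<And>x a. x \<in> carrier R \<Longrightarrow> a \<in> J \<Longrightarrow> x \<otimes> a \<in> J"
  shows "ideal J R"
proof (rule idealI[OF ring_axioms])
  show "subgroup J (add_monoid R)"
  proof
    show "inv\<^bsub>add_monoid R\<^esub> a \<in> J" if "a \<in> J" for a
    proof -
      have "(\<ominus> \<one>) \<otimes> a = \<ominus> a" using that assms(1) by (simp add: l_minus subsetD)
      then show ?thesis using smult[of "\<ominus> \<one>" a] that by (simp add: a_inv_def)
    qed
  qed (use assms in auto)
  show "a \<otimes> x \<in> J" if "a \<in> J" "x \<in> carrier R" for a x
    using smult[OF that(2,1)] that assms(1) by (simp add: m_comm subsetD)
qed (use smult in blast)

lemma ideal_Union_chain:
  assumes "\<C> \<noteq> {}" and ideals: "\<And>X. X \<in> \<C> \<Longrightarrow> ideal X R"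
    and chain: "\<And>X Y. X \<in> \<C> \<Longrightarrow> Y \<in> \<C> \<Longrightarrow> X \<subseteq> Y \<or> Y \<subseteq> X"
  shows "ideal (\<Union>\<C>) R"
proof (rule ideal_if_closed)
  show "\<Union>\<C> \<subseteq> carrier R" using ideal.Icarr[OF ideals] by blast
  obtain X where "X \<in> \<C>" using assms(1) by blast
  then show "\<zero> \<in> \<Union>\<C>" using additive_subgroup.zero_closed[OF ideal.axioms(1)[OF ideals]] by blast
  show "a \<oplus> b \<in> \<Union>\<C>" if ab: "a \<in> \<Union>\<C>" "b \<in> \<Union>\<C>" for a b
  proof -
    obtain X Y where XY: "X \<in> \<C>" "a \<in> X" "Y \<in> \<C>" "b \<in> Y" using ab by blast
    then obtain Z where Z: "Z \<in> \<C>" "a \<in> Z" "b \<in> Z" using chain[OF XY(1,3)] by blast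
    then show ?thesis using additive_subgroup.a_closed[OF ideal.axioms(1)[OF ideals[OF Z(1)]]] by blast
  qed
  show "x \<otimes> a \<in> \<Union>\<C>" if "x \<in> carrier R" "a \<in> \<Union>\<C>" for x a
    using that ideal.I_l_closed[OF ideals] by blast
qed

lemma exists_maximalideal:
  assumes I: "ideal I R" and one: "\<one> \<notin> I"
  shows "\<exists>M. maximalideal M R \<and> I \<subseteq> M"
proof -
  define \<A> where "\<A> = {J. ideal J R \<and> I \<subseteq> J \<and> \<one> \<notin> J}"
  have "\<exists>M\<in>\<A>. \<forall>X\<in>\<A>. M \<subseteq> X \<longrightarrow> X = M"
  proof (rule subset_Zorn_nonempty)
    show "\<A> \<noteq> {}" using I one unfolding \<A>_def by auto
    fix \<C> assume "\<C> \<noteq> {}" and "subset.chain \<A> \<C>"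
    then show "\<Union>\<C> \<in> \<A>"
      using ideal_Union_chain[of \<C>] unfolding \<A>_def subset_chain_def by auto
  qed
  then obtain M where M: "ideal M R" "I \<subseteq> M" "\<one> \<notin> M" and max: "\<forall>X\<in>\<A>. M \<subseteq> X \<longrightarrow> X = M"
    unfolding \<A>_def by blast
  have "maximalideal M R"
  proof (rule maximalidealI[OF M(1)])
    show "carrier R \<noteq> M" using M(3) by auto
    fix J assume J: "ideal J R" "M \<subseteq> J" "J \<subseteq> carrier R"
    show "J = M \<or> J = carrier R"
    proof (cases "\<one> \<in> J")
      case True then show ?thesis using ideal.one_imp_carrier[OF J(1)] by blast
    next
      case False then show ?thesis using J M max unfolding \<A>_def by blast
    qed
  qed
  then show ?thesis using M(2) by blast
qed

context
  fixes A1 A2 :: "nat \<Rightarrow> nat \<Rightarrow> 'a" and k0 k1 k2 :: nat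
  assumes A1: "mat_over R A1 k0 k1" and A2: "mat_over R A2 k1 k2"
begin

lemma splitting_matrix_zero: "splitting_matrix R A1 A2 k0 k1 k2 \<zero> (\<lambda>_ _. \<zero>)"
proof -
  have "matmul R A1 (\<lambda>_ _. \<zero>) k1 i c = \<zero> \<otimes> A1 i c" if "i < k0" "c < k1" for i c
  proof -
    have "matmul R A1 (\<lambda>_ _. \<zero>) k1 i c = (\<Oplus>j\<in>{..<k1}. \<zero>)"
      unfolding matmul_def using A1 that by (intro finsum_cong') (auto simp: mat_over_def)
    then show ?thesis using A1 that by (simp add: mat_over_def)
  qed
  moreover have "matmul R (\<lambda>_ _. \<zero>) A2 k1 r l = \<zero>" if "l < k2" for r l
  proof -
    have "matmul R (\<lambda>_ _. \<zero>) A2 k1 r l = (\<Oplus>j\<in>{..<k1}. \<zero>)"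
      unfolding matmul_def using A2 that by (intro finsum_cong') (auto simp: mat_over_def)
    then show ?thesis by simp
  qed
  ultimately show ?thesis unfolding splitting_matrix_def mat_over_def by auto
qed

lemma splitting_matrix_add:
  assumes "splitting_matrix R A1 A2 k0 k1 k2 \<rho> T" "splitting_matrix R A1 A2 k0 k1 k2 \<rho>' T'"
    and "\<rho> \<in> carrier R" "\<rho>' \<in> carrier R"
  shows "splitting_matrix R A1 A2 k0 k1 k2 (\<rho> \<oplus> \<rho>') (\<lambda>r c. T r c \<oplus> T' r c)"
proof -
  have T: "mat_over R T k1 k1" "mat_over R T' k1 k1" using assms(1,2) unfolding splitting_matrix_def by auto
  have "matmul R A1 (\<lambda>r c. T r c \<oplus> T' r c) k1 i c = (\<rho> \<oplus> \<rho>') \<otimes> A1 i c" if "i < k0" "c < k1" for i c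
  proof -
    have "matmul R A1 (\<lambda>r c. T r c \<oplus> T' r c) k1 i c = matmul R A1 T k1 i c \<oplus> matmul R A1 T' k1 i c"
      using A1 T that by (intro matmul_add_right) (auto simp: mat_over_def)
    then show ?thesis using assms that A1 by (simp add: splitting_matrix_def mat_over_def l_distr)
  qed
  moreover have "matmul R (\<lambda>r c. T r c \<oplus> T' r c) A2 k1 r l = \<zero>" if "r < k1" "l < k2" for r l
  proof -
    have "matmul R (\<lambda>r c. T r c \<oplus> T' r c) A2 k1 r l = matmul R T A2 k1 r l \<oplus> matmul R T' A2 k1 r l"
      using A2 T that by (intro matmul_add_left) (auto simp: mat_over_def)
    then show ?thesis using assms that by (simp add: splitting_matrix_def)
  qed
  ultimately show ?thesis using T unfolding splitting_matrix_def mat_over_def by auto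
qed

lemma splitting_matrix_smult:
  assumes "splitting_matrix R A1 A2 k0 k1 k2 \<rho> T" "\<rho> \<in> carrier R" "x \<in> carrier R"
  shows "splitting_matrix R A1 A2 k0 k1 k2 (x \<otimes> \<rho>) (\<lambda>r c. x \<otimes> T r c)"
proof -
  have T: "mat_over R T k1 k1" using assms(1) unfolding splitting_matrix_def by auto
  have "matmul R A1 (\<lambda>r c. x \<otimes> T r c) k1 i c = (x \<otimes> \<rho>) \<otimes> A1 i c" if "i < k0" "c < k1" for i c
  proof -
    have "matmul R A1 (\<lambda>r c. x \<otimes> T r c) k1 i c = x \<otimes> matmul R A1 T k1 i c"
      using A1 T assms(3) that by (intro matmul_scale_right) (auto simp: mat_over_def)
    then show ?thesis using assms that A1 by (simp add: splitting_matrix_def mat_over_def m_assoc)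
  qed
  moreover have "matmul R (\<lambda>r c. x \<otimes> T r c) A2 k1 r l = \<zero>" if "r < k1" "l < k2" for r l
  proof -
    have "matmul R (\<lambda>r c. x \<otimes> T r c) A2 k1 r l = x \<otimes> matmul R T A2 k1 r l"
      using A2 T assms(3) that by (intro matmul_scale_left) (auto simp: mat_over_def)
    then show ?thesis using assms that by (simp add: splitting_matrix_def)
  qed
  ultimately show ?thesis using T assms(3) unfolding splitting_matrix_def mat_over_def by auto
qed

lemma ideal_splitting_multipliers: "ideal {\<rho> \<in> carrier R. \<exists>T. splitting_matrix R A1 A2 k0 k1 k2 \<rho> T} R"
proof (rule ideal_if_closed)
  show "\<zero> \<in> {\<rho> \<in> carrier R. \<exists>T. splitting_matrix R A1 A2 k0 k1 k2 \<rho> T}"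
    using splitting_matrix_zero by blast
  show "a \<oplus> b \<in> {\<rho> \<in> carrier R. \<exists>T. splitting_matrix R A1 A2 k0 k1 k2 \<rho> T}"
    if "a \<in> {\<rho> \<in> carrier R. \<exists>T. splitting_matrix R A1 A2 k0 k1 k2 \<rho> T}"
      "b \<in> {\<rho> \<in> carrier R. \<exists>T. splitting_matrix R A1 A2 k0 k1 k2 \<rho> T}" for a b
    using that splitting_matrix_add[of a _ b] by (simp add: add.m_closed) blast
  show "x \<otimes> a \<in> {\<rho> \<in> carrier R. \<exists>T. splitting_matrix R A1 A2 k0 k1 k2 \<rho> T}"
    if "x \<in> carrier R" "a \<in> {\<rho> \<in> carrier R. \<exists>T. splitting_matrix R A1 A2 k0 k1 k2 \<rho> T}" for x a
    using that splitting_matrix_smult[of a _ x] by simp blast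
qed blast

end

text \<open>The multipliers \<open>\<rho>\<close> admitting a splitting form an ideal which, by the local case, lies in
  no maximal ideal.\<close>

theorem splitting_matrix_exists:
  assumes loc: "\<forall>M. maximalideal M R \<longrightarrow> fg_ann_trivial_chain_ring (localization R M)"
    and A1: "mat_over R A1 k0 k1" and A2: "mat_over R A2 k1 k2"
    and exact: "\<forall>x\<in>fvec R k1. matvec R A1 k0 k1 x = (\<lambda>_. \<zero>) \<longleftrightarrow> (\<exists>z\<in>fvec R k2. x = matvec R A2 k1 k2 z)"
  shows "\<exists>T. splitting_matrix R A1 A2 k0 k1 k2 \<one> T"
proof (rule ccontr)
  let ?J = "{\<rho> \<in> carrier R. \<exists>T. splitting_matrix R A1 A2 k0 k1 k2 \<rho> T}"
  assume "\<nexists>T. splitting_matrix R A1 A2 k0 k1 k2 \<one> T"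
  then have "\<one> \<notin> ?J" by blast
  then obtain M where M: "maximalideal M R" "?J \<subseteq> M"
    using exists_maximalideal[OF ideal_splitting_multipliers[OF A1 A2]] by blast
  have "chain_localization R M"
    unfolding chain_localization_def chain_localization_axioms_def max_localization_def
      max_localization_axioms_def
    using is_cring M(1) loc by blast
  then interpret chain_localization R M .
  obtain \<rho> T where "\<rho> \<in> carrier R - M" "splitting_matrix R A1 A2 k0 k1 k2 \<rho> T"
    using local_splitting[OF A1 A2 exact] by blast
  then show False using M(2) by blast
qed

end

section \<open>The periodic resolution\<close>

definition compl_mat :: "('a, 'm) ring_scheme \<Rightarrow> (nat \<Rightarrow> nat \<Rightarrow> 'a) \<Rightarrow> nat \<Rightarrow> nat \<Rightarrow> 'a" where
  "compl_mat R T = (\<lambda>r c. (if r = c then \<one>\<^bsub>R\<^esub> else \<zero>\<^bsub>R\<^esub>) \<ominus>\<^bsub>R\<^esub> T r c)"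

context cring
begin

lemma mat_over_compl_mat: "mat_over R T k k \<Longrightarrow> mat_over R (compl_mat R T) k k"
  unfolding mat_over_def compl_mat_def by auto

lemma matvec_compl_mat:
  assumes T: "mat_over R T k k" and x: "x \<in> fvec R k"
  shows "matvec R (compl_mat R T) k k x = (\<lambda>r. x r \<ominus> matvec R T k k x r)"
proof
  fix r
  show "matvec R (compl_mat R T) k k x r = x r \<ominus> matvec R T k k x r"
  proof (cases "r < k")
    case True
    have Tc: "T r c \<in> carrier R" if "c < k" for c using T True that unfolding mat_over_def by blast
    have "(\<Oplus>c\<in>{..<k}. compl_mat R T r c \<otimes> x c) =
        (\<Oplus>c\<in>{..<k}. x c \<otimes> (if c = r then \<one> else \<zero>) \<ominus> T r c \<otimes> x c)"
    proof (intro finsum_cong')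
      fix c assume "c \<in> {..<k}"
      then have "T r c \<in> carrier R" "x c \<in> carrier R" using Tc x by (auto simp: fvec_carrier)
      then show "compl_mat R T r c \<otimes> x c = x c \<otimes> (if c = r then \<one> else \<zero>) \<ominus> T r c \<otimes> x c"
        unfolding compl_mat_def by (cases "c = r") (simp_all add: l_distr l_minus a_minus_def)
    qed (use Tc x in \<open>auto simp: fvec_carrier\<close>)
    also have "\<dots> = (\<Oplus>c\<in>{..<k}. x c \<otimes> (if c = r then \<one> else \<zero>)) \<ominus> (\<Oplus>c\<in>{..<k}. T r c \<otimes> x c)"
      using Tc x by (intro finsum_minus) (auto simp: fvec_carrier)
    also have "(\<Oplus>c\<in>{..<k}. x c \<otimes> (if c = r then \<one> else \<zero>)) = x r"
      using True x by (intro finsum_delta) (auto simp: fvec_carrier)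
    finally show ?thesis unfolding matvec_def using True by simp
  next
    case False
    then have "x r = \<zero>" using x unfolding fvec_def by auto
    then show ?thesis unfolding matvec_def using False by (simp add: a_minus_def)
  qed
qed

context
  fixes A1 A2 T :: "nat \<Rightarrow> nat \<Rightarrow> 'a" and k0 k1 k2 :: nat
  assumes A1: "mat_over R A1 k0 k1" and A2: "mat_over R A2 k1 k2"
    and exact: "\<forall>x\<in>fvec R k1. matvec R A1 k0 k1 x = (\<lambda>_. \<zero>) \<longleftrightarrow> (\<exists>z\<in>fvec R k2. x = matvec R A2 k1 k2 z)"
    and split: "splitting_matrix R A1 A2 k0 k1 k2 \<one> T"
begin

lemma mat_over_T: "mat_over R T k1 k1"
  using split unfolding splitting_matrix_def by blast

lemma matvec_T_fvec: "x \<in> fvec R k1 \<Longrightarrow> matvec R T k1 k1 x \<in> fvec R k1"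
  using matvec_fvec[OF mat_over_T] fvec_carrier by blast

lemma matvec_A1_T: "x \<in> fvec R k1 \<Longrightarrow> matvec R A1 k0 k1 (matvec R T k1 k1 x) = matvec R A1 k0 k1 x"
  using matvec_matvec[OF A1 mat_over_T] split A1
  by (auto intro!: matvec_cong simp: splitting_matrix_def mat_over_def fvec_carrier)

lemma matvec_T_kernel:
  assumes x: "x \<in> fvec R k1" and "matvec R A1 k0 k1 x = (\<lambda>_. \<zero>)"
  shows "matvec R T k1 k1 x = (\<lambda>_. \<zero>)"
proof -
  obtain z where z: "z \<in> fvec R k2" "x = matvec R A2 k1 k2 z" using exact assms by blast
  have "matvec R T k1 k1 x = matvec R (matmul R T A2 k1) k1 k2 z"
    using matvec_matvec[OF mat_over_T A2 z(1)] z(2) by simp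
  also have "\<dots> = matvec R (\<lambda>_ _. \<zero>) k1 k2 z"
    using split z(1) by (intro matvec_cong) (auto simp: splitting_matrix_def mat_over_def fvec_carrier)
  also have "\<dots> = (\<lambda>_. \<zero>)"
  proof -
    have "(\<Oplus>c\<in>{..<k2}. \<zero> \<otimes> z c) = (\<Oplus>c\<in>{..<k2}. \<zero>)"
      using z(1) by (intro finsum_cong') (auto simp: fvec_carrier)
    then show ?thesis unfolding matvec_def by (simp add: fun_eq_iff)
  qed
  finally show ?thesis .
qed

lemma matvec_T_idem:
  assumes x: "x \<in> fvec R k1"
  shows "matvec R T k1 k1 (matvec R T k1 k1 x) = matvec R T k1 k1 x"
proof -
  have Tx: "matvec R T k1 k1 x \<in> fvec R k1" by (rule matvec_T_fvec[OF x])
  let ?y = "\<lambda>c. matvec R T k1 k1 x c \<ominus> x c"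
  have "matvec R A1 k0 k1 ?y = (\<lambda>i. matvec R A1 k0 k1 (matvec R T k1 k1 x) i \<ominus> matvec R A1 k0 k1 x i)"
    using matvec_diff[OF A1 Tx x] .
  also have "\<dots> = (\<lambda>_. \<zero>)" using matvec_A1_T[OF x] matvec_carrier[OF A1 x] by (simp add: a_minus_def r_neg)
  finally have "matvec R T k1 k1 ?y = (\<lambda>_. \<zero>)" using matvec_T_kernel fvec_diff[OF Tx x] by blast
  then have "(\<lambda>r. matvec R T k1 k1 (matvec R T k1 k1 x) r \<ominus> matvec R T k1 k1 x r) = (\<lambda>_. \<zero>)"
    using matvec_diff[OF mat_over_T Tx x] by simp
  then show ?thesis
    using minus_eq_zero_iff matvec_carrier[OF mat_over_T Tx] matvec_carrier[OF mat_over_T x]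
    by (simp add: fun_eq_iff)
qed

lemma kernel_A1_eq_image_compl:
  "\<forall>x\<in>fvec R k1. matvec R A1 k0 k1 x = (\<lambda>_. \<zero>) \<longleftrightarrow> (\<exists>z\<in>fvec R k1. x = matvec R (compl_mat R T) k1 k1 z)"
proof (intro ballI iffI)
  fix x assume x: "x \<in> fvec R k1" and "matvec R A1 k0 k1 x = (\<lambda>_. \<zero>)"
  then have "matvec R (compl_mat R T) k1 k1 x = x"
    using matvec_compl_mat[OF mat_over_T x] matvec_T_kernel x by (simp add: fun_eq_iff a_minus_def fvec_carrier)
  then show "\<exists>z\<in>fvec R k1. x = matvec R (compl_mat R T) k1 k1 z" using x by metis
next
  fix x assume "\<exists>z\<in>fvec R k1. x = matvec R (compl_mat R T) k1 k1 z"
  then obtain z where z: "z \<in> fvec R k1" "x = matvec R (compl_mat R T) k1 k1 z" by blast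
  have Tz: "matvec R T k1 k1 z \<in> fvec R k1" by (rule matvec_T_fvec[OF z(1)])
  have "matvec R A1 k0 k1 x = (\<lambda>i. matvec R A1 k0 k1 z i \<ominus> matvec R A1 k0 k1 (matvec R T k1 k1 z) i)"
    using z(2) matvec_compl_mat[OF mat_over_T z(1)] matvec_diff[OF A1 z(1) Tz] by simp
  also have "\<dots> = (\<lambda>_. \<zero>)" using matvec_A1_T[OF z(1)] matvec_carrier[OF A1 z(1)] by (simp add: a_minus_def r_neg)
  finally show "matvec R A1 k0 k1 x = (\<lambda>_. \<zero>)" .
qed

lemma kernel_compl_eq_image_T:
  "\<forall>x\<in>fvec R k1. matvec R (compl_mat R T) k1 k1 x = (\<lambda>_. \<zero>) \<longleftrightarrow> (\<exists>z\<in>fvec R k1. x = matvec R T k1 k1 z)"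
proof (intro ballI iffI)
  fix x assume x: "x \<in> fvec R k1" and "matvec R (compl_mat R T) k1 k1 x = (\<lambda>_. \<zero>)"
  then have "x = matvec R T k1 k1 x"
    using matvec_compl_mat[OF mat_over_T x] minus_eq_zero_iff fvec_carrier[OF x]
      matvec_carrier[OF mat_over_T x] by (simp add: fun_eq_iff)
  then show "\<exists>z\<in>fvec R k1. x = matvec R T k1 k1 z" using x by blast
next
  fix x assume "\<exists>z\<in>fvec R k1. x = matvec R T k1 k1 z"
  then obtain z where z: "z \<in> fvec R k1" "x = matvec R T k1 k1 z" by blast
  then have "matvec R (compl_mat R T) k1 k1 x = (\<lambda>r. x r \<ominus> x r)"
    using matvec_compl_mat[OF mat_over_T matvec_T_fvec[OF z(1)]] matvec_T_idem[OF z(1)] by simp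
  then show "matvec R (compl_mat R T) k1 k1 x = (\<lambda>_. \<zero>)"
    using z matvec_carrier[OF mat_over_T z(1)] by (simp add: a_minus_def r_neg)
qed

lemma kernel_T_eq_image_compl:
  "\<forall>x\<in>fvec R k1. matvec R T k1 k1 x = (\<lambda>_. \<zero>) \<longleftrightarrow> (\<exists>z\<in>fvec R k1. x = matvec R (compl_mat R T) k1 k1 z)"
proof (intro ballI iffI)
  fix x assume x: "x \<in> fvec R k1" and "matvec R T k1 k1 x = (\<lambda>_. \<zero>)"
  then have "matvec R (compl_mat R T) k1 k1 x = x"
    using matvec_compl_mat[OF mat_over_T x] by (simp add: fun_eq_iff a_minus_def fvec_carrier)
  then show "\<exists>z\<in>fvec R k1. x = matvec R (compl_mat R T) k1 k1 z" using x by metis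
next
  fix x assume "\<exists>z\<in>fvec R k1. x = matvec R (compl_mat R T) k1 k1 z"
  then obtain z where z: "z \<in> fvec R k1" "x = matvec R (compl_mat R T) k1 k1 z" by blast
  have Tz: "matvec R T k1 k1 z \<in> fvec R k1" by (rule matvec_T_fvec[OF z(1)])
  have "matvec R T k1 k1 x = (\<lambda>i. matvec R T k1 k1 z i \<ominus> matvec R T k1 k1 (matvec R T k1 k1 z) i)"
    using z(2) matvec_compl_mat[OF mat_over_T z(1)] matvec_diff[OF mat_over_T z(1) Tz] by simp
  also have "\<dots> = (\<lambda>_. \<zero>)"
    using matvec_T_idem[OF z(1)] matvec_carrier[OF mat_over_T z(1)] by (simp add: a_minus_def r_neg)
  finally show "matvec R T k1 k1 x = (\<lambda>_. \<zero>)" .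
qed

end

lemma lambda_ge_2E:
  assumes "lambda_ge R E 2"
  obtains k0 k1 k2 :: nat and A1 A2 :: "nat \<Rightarrow> nat \<Rightarrow> 'a" and g
  where "\<forall>j<k0. g j \<in> carrier E" "mat_over R A1 k0 k1" "mat_over R A2 k1 k2"
    "\<forall>y\<in>carrier E. \<exists>x\<in>fvec R k0. y = lincomb E k0 g x"
    "\<forall>x\<in>fvec R k0. lincomb E k0 g x = \<zero>\<^bsub>E\<^esub> \<longleftrightarrow> (\<exists>z\<in>fvec R k1. x = matvec R A1 k0 k1 z)"
    "\<forall>x\<in>fvec R k1. matvec R A1 k0 k1 x = (\<lambda>_. \<zero>) \<longleftrightarrow> (\<exists>z\<in>fvec R k2. x = matvec R A2 k1 k2 z)"
proof -
  obtain k :: "nat \<Rightarrow> nat" and A g where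
    g: "\<forall>j<k 0. g j \<in> carrier E" and
    A: "\<forall>i\<in>{1..2::nat}. \<forall>r<k (i - 1). \<forall>c<k i. A i r c \<in> carrier R" and
    gen: "\<forall>y\<in>carrier E. \<exists>x\<in>fvec R (k 0). y = lincomb E (k 0) g x" and
    ex0: "1 \<le> (2::nat) \<longrightarrow> (\<forall>x\<in>fvec R (k 0).
      lincomb E (k 0) g x = \<zero>\<^bsub>E\<^esub> \<longleftrightarrow> (\<exists>z\<in>fvec R (k 1). x = matvec R (A 1) (k 0) (k 1) z))" and
    ex1: "\<forall>i. 1 \<le> i \<and> i < (2::nat) \<longrightarrow> (\<forall>x\<in>fvec R (k i).
      matvec R (A i) (k (i - 1)) (k i) x = (\<lambda>_. \<zero>) \<longleftrightarrow>
      (\<exists>z\<in>fvec R (k (Suc i)). x = matvec R (A (Suc i)) (k i) (k (Suc i)) z))"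
    using assms unfolding lambda_ge_def by (elim exE conjE) (rule that; assumption)
  have A1: "mat_over R (A 1) (k 0) (k 1)" using bspec[OF A, of 1] unfolding mat_over_def by simp
  have A2: "mat_over R (A 2) (k 1) (k 2)" using bspec[OF A, of 2] unfolding mat_over_def by simp
  have exact1: "\<forall>x\<in>fvec R (k 1). matvec R (A 1) (k 0) (k 1) x = (\<lambda>_. \<zero>) \<longleftrightarrow>
      (\<exists>z\<in>fvec R (k 2). x = matvec R (A 2) (k 1) (k 2) z)"
    using ex1[rule_format, of 1] by (simp add: numeral_2_eq_2)
  have exact0: "\<forall>x\<in>fvec R (k 0). lincomb E (k 0) g x = \<zero>\<^bsub>E\<^esub> \<longleftrightarrow> (\<exists>z\<in>fvec R (k 1). x = matvec R (A 1) (k 0) (k 1) z)"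
    using ex0 by simp
  show ?thesis by (rule that[OF g A1 A2 gen exact0 exact1])
qed

text \<open>With \<open>T\<close> splitting off \<open>ker A\<^sub>1\<close>, the resolution continues periodically:
  \<open>\<dots> \<rightarrow> F\<^sub>1 \<rightarrow> F\<^sub>1 \<rightarrow> F\<^sub>1 \<rightarrow> F\<^sub>0 \<rightarrow> E\<close> with maps \<open>A\<^sub>1\<close>, \<open>1 - T\<close>, \<open>T\<close>, \<open>1 - T\<close>, \<open>T\<close>, \<dots>\<close>

lemma lambda_infinite_if_periodic:
  assumes g: "\<forall>j<k0. g j \<in> carrier E" and A1: "mat_over R A1 k0 k1" and T: "mat_over R T k1 k1"
    and gen: "\<forall>y\<in>carrier E. \<exists>x\<in>fvec R k0. y = lincomb E k0 g x"
    and ex0: "\<forall>x\<in>fvec R k0. lincomb E k0 g x = \<zero>\<^bsub>E\<^esub> \<longleftrightarrow> (\<exists>z\<in>fvec R k1. x = matvec R A1 k0 k1 z)"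
    and ex1: "\<forall>x\<in>fvec R k1. matvec R A1 k0 k1 x = (\<lambda>_. \<zero>) \<longleftrightarrow>
      (\<exists>z\<in>fvec R k1. x = matvec R (compl_mat R T) k1 k1 z)"
    and ex_even: "\<forall>x\<in>fvec R k1. matvec R (compl_mat R T) k1 k1 x = (\<lambda>_. \<zero>) \<longleftrightarrow>
      (\<exists>z\<in>fvec R k1. x = matvec R T k1 k1 z)"
    and ex_odd: "\<forall>x\<in>fvec R k1. matvec R T k1 k1 x = (\<lambda>_. \<zero>) \<longleftrightarrow>
      (\<exists>z\<in>fvec R k1. x = matvec R (compl_mat R T) k1 k1 z)"
  shows "lambda_infinite R E"
  unfolding lambda_infinite_def
proof
  fix n
  define k where "k i = (if i = 0 then k0 else k1)" for i :: nat
  define A where "A i = (if i = 1 then A1 else if even i then compl_mat R T else T)" for i :: nat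
  have A_mat: "mat_over R (A i) (k (i - 1)) (k i)" if "i \<ge> 1" for i
    using that A1 T mat_over_compl_mat[OF T] unfolding A_def k_def by auto
  have exact: "\<forall>x\<in>fvec R (k i). matvec R (A i) (k (i - 1)) (k i) x = (\<lambda>_. \<zero>) \<longleftrightarrow>
      (\<exists>z\<in>fvec R (k (Suc i)). x = matvec R (A (Suc i)) (k i) (k (Suc i)) z)" if "i \<ge> 1" for i
  proof (cases "i = 1")
    case True then show ?thesis using ex1 unfolding A_def k_def by simp
  next
    case False
    then have "i \<ge> 2" using that by simp
    then show ?thesis using ex_even ex_odd unfolding A_def k_def by auto
  qed
  show "lambda_ge R E n"
    unfolding lambda_ge_def
  proof (intro exI[of _ k] exI[of _ A] exI[of _ g] conjI)
    show "\<forall>i\<in>{1..n}. \<forall>r<k (i - 1). \<forall>c<k i. A i r c \<in> carrier R"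
      using A_mat unfolding mat_over_def by auto
    show "\<forall>i. 1 \<le> i \<and> i < n \<longrightarrow> (\<forall>x\<in>fvec R (k i). matvec R (A i) (k (i - 1)) (k i) x = (\<lambda>_. \<zero>) \<longleftrightarrow>
        (\<exists>z\<in>fvec R (k (Suc i)). x = matvec R (A (Suc i)) (k i) (k (Suc i)) z))"
      using exact by blast
  qed (use g gen ex0 in \<open>simp_all add: k_def A_def\<close>)
qed

end

theorem corollary2p13:
  fixes R :: "'a ring" and E :: "('a, 'b) module"
  assumes "cring R"
    and "arithmetic_ring R"
    and "\<forall>M. maximalideal M R \<longrightarrow>
           domain (localization R M) \<or> \<not> coherent_ring (localization R M)"
    and "module R E"
    and "lambda_ge R E 2"
  shows "lambda_infinite R E"
proof -
  interpret cring R by fact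
  have loc: "\<forall>M. maximalideal M R \<longrightarrow> fg_ann_trivial_chain_ring (localization R M)"
  proof (intro allI impI)
    fix M assume M: "maximalideal M R"
    then have "valuation_ring (localization R M)" using assms(2) unfolding arithmetic_ring_def by blast
    then show "fg_ann_trivial_chain_ring (localization R M)"
      using fg_ann_trivial_chain_ringI assms(3) M by blast
  qed
  obtain k0 k1 k2 A1 A2 g where g: "\<forall>j<k0. g j \<in> carrier E"
    and A1: "mat_over R A1 k0 k1" and A2: "mat_over R A2 k1 k2"
    and gen: "\<forall>y\<in>carrier E. \<exists>x\<in>fvec R k0. y = lincomb E k0 g x"
    and ex0: "\<forall>x\<in>fvec R k0. lincomb E k0 g x = \<zero>\<^bsub>E\<^esub> \<longleftrightarrow> (\<exists>z\<in>fvec R k1. x = matvec R A1 k0 k1 z)"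
    and ex1: "\<forall>x\<in>fvec R k1. matvec R A1 k0 k1 x = (\<lambda>_. \<zero>\<^bsub>R\<^esub>) \<longleftrightarrow> (\<exists>z\<in>fvec R k2. x = matvec R A2 k1 k2 z)"
    by (rule lambda_ge_2E[OF assms(5)])
  obtain T where T: "splitting_matrix R A1 A2 k0 k1 k2 \<one>\<^bsub>R\<^esub> T"
    using splitting_matrix_exists[OF loc A1 A2 ex1] by blast
  show ?thesis
    using lambda_infinite_if_periodic[OF g A1 mat_over_T[OF A1 A2 ex1 T] gen ex0
        kernel_A1_eq_image_compl[OF A1 A2 ex1 T] kernel_compl_eq_image_T[OF A1 A2 ex1 T]
        kernel_T_eq_image_compl[OF A1 A2 ex1 T]] .
qed

end
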